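(* Let $\boldsymbol k$ be an algebraically closed field with $\operatorname{char}\boldsymbol k\neq 2$, let $V$ be a vector space over $\boldsymbol k$ of finite dimension $n$, let $\mathcal M:=V^*\otimes V^*\otimes V$, and let $G:=\mathrm{GL}(V)$ act naturally on $\mathcal M$. Then there exist two finite sets $\{s_p\}_{p\in P}$ and $\{t_q\}_{q\in Q}$ of nonconstant polynomial functions on $\mathcal M$ such that: (i) the closed subset $\mathcal S:=\{m\in\mathcal M\mid s_p(m)=0\ \forall p\in P\}$ is irreducible, and the map $\boldsymbol k(\mathcal M)^G\to\boldsymbol k(\mathcal S)$, $f\mapsto f|_{\mathcal S}$, is well defined and is a $\boldsymbol k$-isomorphism of fields; (ii) for every point $a$ of the open dense subset $\{m\in\mathcal M\mid t_q(m)\neq 0\ \forall q\in Q\}$ of $\mathcal M$ there exists a unique element $g\in G$ with $g\cdot a\in\mathcal S$.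
   Context: $\boldsymbol k(\mathcal M)^G$ denotes the field of $G$-invariant rational functions on $\mathcal M$, and $\boldsymbol k(\mathcal S)$ the field of rational functions on the irreducible variety $\mathcal S$. Topology is the Zariski topology. *)

theory Defs
  imports Main "HOL-Computational_Algebra.Polynomial"
begin

definition alg_closed :: "'k::field itself \<Rightarrow> bool" where
  "alg_closed _ \<longleftrightarrow> (\<forall>p::'k poly. degree p > 0 \<longrightarrow> (\<exists>x. poly p x = 0))"

text \<open>V = k^n with basis indexed by the finite type 'n.  An element of
  M = V* \<otimes> V* \<otimes> V is given by its structure constants m i j c, i.e.
  the bilinear map with m(e_i,e_j) = \<Sum>c. m i j c e_c.\<close>
type_synonym ('k,'n) tensor = "'n \<Rightarrow> 'n \<Rightarrow> 'n \<Rightarrow> 'k"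
type_synonym ('k,'n) mat = "'n \<Rightarrow> 'n \<Rightarrow> 'k"

definition mat_mult :: "('k::comm_ring_1,'n::finite) mat \<Rightarrow> ('k,'n) mat \<Rightarrow> ('k,'n) mat" where
  "mat_mult A B = (\<lambda>i j. \<Sum>l\<in>UNIV. A i l * B l j)"

definition mat_one :: "('k::comm_ring_1,'n::finite) mat" where
  "mat_one = (\<lambda>i j. if i = j then 1 else 0)"

definition GL :: "('k::comm_ring_1,'n::finite) mat set" where
  "GL = {g. \<exists>h. mat_mult g h = mat_one \<and> mat_mult h g = mat_one}"

definition mat_inv :: "('k::comm_ring_1,'n::finite) mat \<Rightarrow> ('k,'n) mat" where
  "mat_inv g = (SOME h. mat_mult g h = mat_one \<and> mat_mult h g = mat_one)"

text \<open>Natural action: (g.m)(x,y) = g (m (g^-1 x, g^-1 y)), where g e_a = \<Sum>c. g c a e_c.\<close>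
definition act :: "('k::comm_ring_1,'n::finite) mat \<Rightarrow> ('k,'n) tensor \<Rightarrow> ('k,'n) tensor" where
  "act g m = (\<lambda>i j k. \<Sum>a\<in>UNIV. \<Sum>b\<in>UNIV. \<Sum>c\<in>UNIV.
       mat_inv g a i * mat_inv g b j * m a b c * g k c)"

inductive_set polyfun :: "(('k::comm_ring_1,'n) tensor \<Rightarrow> 'k) set" where
  const: "(\<lambda>_. c) \<in> polyfun"
| coord: "(\<lambda>m. m i j k) \<in> polyfun"
| add: "p \<in> polyfun \<Longrightarrow> q \<in> polyfun \<Longrightarrow> (\<lambda>m. p m + q m) \<in> polyfun"
| mult: "p \<in> polyfun \<Longrightarrow> q \<in> polyfun \<Longrightarrow> (\<lambda>m. p m * q m) \<in> polyfun"

definition nonconstant :: "('a \<Rightarrow> 'k) \<Rightarrow> bool" where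
  "nonconstant f \<longleftrightarrow> (\<exists>x y. f x \<noteq> f y)"

definition zariski_closed :: "('k::comm_ring_1,'n) tensor set \<Rightarrow> bool" where
  "zariski_closed Z \<longleftrightarrow> (\<exists>F \<subseteq> polyfun. Z = {m. \<forall>f\<in>F. f m = 0})"

definition zariski_open :: "('k::comm_ring_1,'n) tensor set \<Rightarrow> bool" where
  "zariski_open U \<longleftrightarrow> zariski_closed (- U)"

definition zariski_dense :: "('k::comm_ring_1,'n) tensor set \<Rightarrow> bool" where
  "zariski_dense U \<longleftrightarrow> (\<forall>W. zariski_open W \<and> W \<noteq> {} \<longrightarrow> W \<inter> U \<noteq> {})"

definition irreducible_set :: "('k::comm_ring_1,'n) tensor set \<Rightarrow> bool" where
  "irreducible_set S \<longleftrightarrow> S \<noteq> {} \<and>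
     (\<forall>Z1 Z2. zariski_closed Z1 \<and> zariski_closed Z2 \<and> S \<subseteq> Z1 \<union> Z2 \<longrightarrow> S \<subseteq> Z1 \<or> S \<subseteq> Z2)"

text \<open>Rational functions are represented by fractions (p,q) of polynomial functions.
  k(M): q not identically zero; two fractions are equal iff p q' = p' q on M.
  k(S) for irreducible closed S: q not identically zero on S; equality iff p q' = p' q on S.\<close>
definition ratM :: "((('k::comm_ring_1,'n) tensor \<Rightarrow> 'k) \<times> (('k,'n) tensor \<Rightarrow> 'k)) set" where
  "ratM = {(p,q). p \<in> polyfun \<and> q \<in> polyfun \<and> (\<exists>m. q m \<noteq> 0)}"

definition eqM :: "(('k::comm_ring_1,'n) tensor \<Rightarrow> 'k) \<times> (('k,'n) tensor \<Rightarrow> 'k)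
     \<Rightarrow> (('k,'n) tensor \<Rightarrow> 'k) \<times> (('k,'n) tensor \<Rightarrow> 'k) \<Rightarrow> bool" where
  "eqM f f' \<longleftrightarrow> (\<forall>m. fst f m * snd f' m = fst f' m * snd f m)"

definition ratM_inv :: "((('k::field,'n::finite) tensor \<Rightarrow> 'k) \<times> (('k,'n) tensor \<Rightarrow> 'k)) set" where
  "ratM_inv = {f \<in> ratM. \<forall>g\<in>GL. eqM (fst f \<circ> act g, snd f \<circ> act g) f}"

definition ratS :: "('k::comm_ring_1,'n) tensor set
     \<Rightarrow> ((('k,'n) tensor \<Rightarrow> 'k) \<times> (('k,'n) tensor \<Rightarrow> 'k)) set" where
  "ratS S = {(p,q). p \<in> polyfun \<and> q \<in> polyfun \<and> (\<exists>m\<in>S. q m \<noteq> 0)}"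

definition eqS :: "('k::comm_ring_1,'n) tensor set \<Rightarrow> (('k,'n) tensor \<Rightarrow> 'k) \<times> (('k,'n) tensor \<Rightarrow> 'k)
     \<Rightarrow> (('k,'n) tensor \<Rightarrow> 'k) \<times> (('k,'n) tensor \<Rightarrow> 'k) \<Rightarrow> bool" where
  "eqS S f f' \<longleftrightarrow> (\<forall>m\<in>S. fst f m * snd f' m = fst f' m * snd f m)"

text \<open>The restriction map k(M)^G \<rightarrow> k(S), f \<mapsto> f|_S, is well defined and bijective.
  On representatives it is the identity (a fraction whose denominator does not vanish
  identically on S is read as an element of k(S)); hence it is automatically compatible
  with the field operations and with k-scalars, so it is a k-isomorphism of fields iff:
  (1) every class in k(M)^G has a representative whose denominator does not vanish on S
      (well-definedness, independence of representative being automatic);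
  (2) it is injective; (3) it is surjective.\<close>
definition restriction_iso :: "('k::field,'n::finite) tensor set \<Rightarrow> bool" where
  "restriction_iso S \<longleftrightarrow>
     (\<forall>f\<in>ratM_inv. \<exists>f'\<in>ratS S. eqM f f') \<and>
     (\<forall>f1\<in>ratM_inv \<inter> ratS S. \<forall>f2\<in>ratM_inv \<inter> ratS S. eqS S f1 f2 \<longrightarrow> eqM f1 f2) \<and>
     (\<forall>h\<in>ratS S. \<exists>f\<in>ratM_inv \<inter> ratS S. eqS S f h)"

end

theory Submission
  imports Defs "HOL-Analysis.Determinants"
begin

text \<open>
  View \<open>m \<in> M\<close> as a bilinear product \<open>x \<cdot> y\<close> on \<open>V\<close>, let \<open>\<tau>(y) = tr(z \<mapsto> y \<cdot> z)\<close> and let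
  \<open>A(x, y) = \<tau>(x \<cdot> y)\<close> be the associated trace form. All of these are \<open>GL(V)\<close>-equivariant.
  Where \<open>A\<close> is nondegenerate there is a unique \<open>u\<close> with \<open>A(u, -) = \<tau>\<close>, and the vectors
  \<open>v\<^sub>0 = u\<close>, \<open>v\<^sub>k\<^sub>+\<^sub>1 = u \<cdot> v\<^sub>k\<close> depend rationally and equivariantly on \<open>m\<close>. On the open set where
  they form a basis, the matrix \<open>P(m)\<close> with columns \<open>v\<^sub>k\<close> satisfies \<open>P(g \<cdot> m) = g P(m)\<close>, so
  \<open>g = P(m)\<^sup>-\<^sup>1\<close> is the unique group element moving \<open>m\<close> into the slice \<open>S = {P = 1}\<close>.
  Writing out \<open>P = 1\<close> gives a normal form that is the fixed-point set of a polynomial retraction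
  of \<open>M\<close>; hence \<open>S\<close> is irreducible. Finally, for any slice with a rational normalizer
  \<open>\<gamma>\<close>, an invariant rational function is determined by its restriction to \<open>S\<close>, and a rational
  function \<open>h\<close> on \<open>S\<close> extends to the invariant \<open>m \<mapsto> h(\<gamma>(m) \<cdot> m)\<close>.
\<close>

section \<open>Polynomial functions\<close>

lemma polyfun_diff:
  assumes "p \<in> polyfun" "q \<in> polyfun"
  shows "(\<lambda>m. p m - q m) \<in> polyfun"
proof -
  have "(\<lambda>m. p m + (\<lambda>_. -1) m * q m) \<in> polyfun"
    using assms by (intro polyfun.intros)
  then show ?thesis by simp
qed

lemma polyfun_if:
  "p \<in> polyfun \<Longrightarrow> q \<in> polyfun \<Longrightarrow> (\<lambda>m. if P then p m else q m) \<in> polyfun"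
  by (cases P) simp_all

lemma polyfun_sum:
  "finite A \<Longrightarrow> (\<And>a. a \<in> A \<Longrightarrow> (\<lambda>m. F a m) \<in> polyfun) \<Longrightarrow> (\<lambda>m. \<Sum>a\<in>A. F a m) \<in> polyfun"
proof (induction A rule: finite_induct)
  case empty
  then show ?case using polyfun.const[of 0] by simp
next
  case (insert x A)
  then show ?case by (simp add: polyfun.add)
qed

lemma polyfun_prod:
  "finite A \<Longrightarrow> (\<And>a. a \<in> A \<Longrightarrow> (\<lambda>m. F a m) \<in> polyfun) \<Longrightarrow> (\<lambda>m. \<Prod>a\<in>A. F a m) \<in> polyfun"
proof (induction A rule: finite_induct)
  case empty
  then show ?case using polyfun.const[of 1] by simp
next
  case (insert x A)
  then show ?case by (simp add: polyfun.mult)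
qed

lemma polyfun_det:
  fixes M :: "('k::comm_ring_1,'n::finite) tensor \<Rightarrow> 'm::finite \<Rightarrow> 'm \<Rightarrow> 'k"
  assumes "\<And>i j. (\<lambda>m. M m i j) \<in> polyfun"
  shows "(\<lambda>m. det (\<chi> i j. M m i j)) \<in> polyfun"
  unfolding det_def
  by (intro polyfun_sum polyfun.mult polyfun.const polyfun_prod) (simp_all add: assms)

lemma polyfun_compose:
  assumes "p \<in> polyfun" and "\<And>i j c. (\<lambda>m. F m i j c) \<in> polyfun"
  shows "(\<lambda>m. p (F m)) \<in> polyfun"
  using assms(1)
proof induction
  case (const c)
  then show ?case by (rule polyfun.const)
next
  case (coord i j k)
  then show ?case by (rule assms(2))
next
  case (add p q)
  then show ?case using polyfun.add[of "\<lambda>m. p (F m)" "\<lambda>m. q (F m)"] by simp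
next
  case (mult p q)
  then show ?case using polyfun.mult[of "\<lambda>m. p (F m)" "\<lambda>m. q (F m)"] by simp
qed

lemma polyfun_on_line:
  assumes "p \<in> polyfun"
  shows "\<exists>P. \<forall>t. poly P t = p (\<lambda>i j c. a i j c + t * b i j c)"
  using assms
proof induction
  case (const c)
  then show ?case by (intro exI[of _ "[:c:]"]) simp
next
  case (coord i j k)
  then show ?case by (intro exI[of _ "[:a i j k, b i j k:]"]) (simp add: algebra_simps)
next
  case (add p q)
  then obtain P Q where "\<forall>t. poly P t = p (\<lambda>i j c. a i j c + t * b i j c)"
    "\<forall>t. poly Q t = q (\<lambda>i j c. a i j c + t * b i j c)" by blast
  then show ?case by (intro exI[of _ "P + Q"]) simp
next
  case (mult p q)
  then obtain P Q where "\<forall>t. poly P t = p (\<lambda>i j c. a i j c + t * b i j c)"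
    "\<forall>t. poly Q t = q (\<lambda>i j c. a i j c + t * b i j c)" by blast
  then show ?case by (intro exI[of _ "P * Q"]) simp
qed

lemma alg_closed_imp_infinite:
  assumes "alg_closed TYPE('k::field)"
  shows "infinite (UNIV :: 'k set)"
proof
  assume fin: "finite (UNIV :: 'k set)"
  define P :: "'k poly" where "P = (\<Prod>a\<in>UNIV. [:-a, 1:]) + 1"
  have "degree (\<Prod>a\<in>(UNIV::'k set). [:-a, 1:]) = card (UNIV::'k set)"
    by (subst degree_prod_eq_sum_degree) auto
  moreover have "card (UNIV :: 'k set) > 0"
    using fin by (simp add: card_gt_0_iff)
  ultimately have "degree P > 0"
    unfolding P_def by (metis degree_add_eq_left degree_1)
  then obtain x where "poly P x = 0"
    using assms unfolding alg_closed_def by blast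
  moreover have "poly (\<Prod>a\<in>(UNIV::'k set). [:-a, 1:]) x = 0"
    using fin by (auto simp: poly_prod intro!: prod_zero bexI[of _ x])
  ultimately show False
    unfolding P_def by simp
qed

text \<open>Over an infinite field the ring of polynomial functions is a domain.\<close>

lemma polyfun_common_nonzero:
  fixes p q :: "('k::field,'n) tensor \<Rightarrow> 'k"
  assumes "infinite (UNIV :: 'k set)" "p \<in> polyfun" "q \<in> polyfun" "p a \<noteq> 0" "q b \<noteq> 0"
  shows "\<exists>m. p m \<noteq> 0 \<and> q m \<noteq> 0"
proof -
  define line where "line t = (\<lambda>i j c. a i j c + t * (b i j c - a i j c))" for t :: 'k
  obtain P where P: "\<And>t. poly P t = p (line t)"
    using polyfun_on_line[OF assms(2), of a "\<lambda>i j c. b i j c - a i j c"]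
    unfolding line_def by blast
  obtain Q where Q: "\<And>t. poly Q t = q (line t)"
    using polyfun_on_line[OF assms(3), of a "\<lambda>i j c. b i j c - a i j c"]
    unfolding line_def by blast
  have "line 0 = a" "line 1 = b"
    unfolding line_def by simp_all
  then have "P * Q \<noteq> 0"
    using P[of 0] Q[of 1] assms(4,5) by auto
  then have "finite {t. poly (P * Q) t = 0}"
    by (rule poly_roots_finite)
  then obtain t where "poly (P * Q) t \<noteq> 0"
    using ex_new_if_finite[OF assms(1)] by blast
  then show ?thesis
    using P Q by auto
qed

lemma polyfun_vanishes_from_nonzero_locus:
  fixes F E :: "('k::field,'n) tensor \<Rightarrow> 'k"
  assumes "infinite (UNIV :: 'k set)" "F \<in> polyfun" "E \<in> polyfun" "E a \<noteq> 0"
    and "\<And>m. E m \<noteq> 0 \<Longrightarrow> F m = 0"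
  shows "F m = 0"
  using polyfun_common_nonzero[OF assms(1-3), of m a] assms(4,5) by blast

section \<open>Matrices and the general linear group\<close>

lemma mult_delta [simp]: "x * (if a = b then 1 else 0) = (if a = b then x else (0::'a::semiring_1))"
  by simp

lemma delta_mult [simp]: "(if a = b then 1 else 0) * x = (if a = b then x else (0::'a::semiring_1))"
  by simp

lemma mat_mult_assoc: "mat_mult (mat_mult A B) C = mat_mult A (mat_mult B C)"
  unfolding mat_mult_def
  by (intro ext) (simp add: sum_distrib_left sum_distrib_right mult.assoc, rule sum.swap)

lemma mat_mult_one_left [simp]: "mat_mult mat_one A = A"
  unfolding mat_mult_def mat_one_def by (intro ext) (simp add: delta_mult)

lemma mat_mult_one_right [simp]: "mat_mult A mat_one = A"
  unfolding mat_mult_def mat_one_def by (intro ext) (simp add: mult_delta)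

lemma GL_mat_inv:
  assumes "g \<in> GL"
  shows "mat_mult g (mat_inv g) = mat_one" "mat_mult (mat_inv g) g = mat_one"
proof -
  from assms obtain h where "mat_mult g h = mat_one \<and> mat_mult h g = mat_one"
    unfolding GL_def by blast
  then have "mat_mult g (mat_inv g) = mat_one \<and> mat_mult (mat_inv g) g = mat_one"
    unfolding mat_inv_def by (rule someI[where P = "\<lambda>h. mat_mult g h = mat_one \<and> mat_mult h g = mat_one"])
  then show "mat_mult g (mat_inv g) = mat_one" "mat_mult (mat_inv g) g = mat_one"
    by auto
qed

lemma GL_one [simp]: "mat_one \<in> GL"
  unfolding GL_def by (intro CollectI exI[of _ mat_one]) simp

lemma GL_mat_inv_closed: "g \<in> GL \<Longrightarrow> mat_inv g \<in> GL"
  unfolding GL_def using GL_mat_inv[unfolded GL_def] by blast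

lemma GL_mult:
  assumes "g \<in> GL" "h \<in> GL"
  shows "mat_mult g h \<in> GL"
proof -
  let ?k = "mat_mult (mat_inv h) (mat_inv g)"
  have "mat_mult (mat_mult g h) ?k = mat_mult g (mat_mult (mat_mult h (mat_inv h)) (mat_inv g))"
    "mat_mult ?k (mat_mult g h) = mat_mult (mat_inv h) (mat_mult (mat_mult (mat_inv g) g) h)"
    by (simp_all only: mat_mult_assoc)
  then have "mat_mult (mat_mult g h) ?k = mat_one" "mat_mult ?k (mat_mult g h) = mat_one"
    by (simp_all add: GL_mat_inv assms)
  then show ?thesis
    unfolding GL_def by blast
qed

lemma mat_inv_unique_left:
  assumes "g \<in> GL" "mat_mult h g = mat_one"
  shows "h = mat_inv g"
proof -
  have "h = mat_mult h (mat_mult g (mat_inv g))"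
    by (simp add: GL_mat_inv assms)
  also have "\<dots> = mat_inv g"
    by (simp add: mat_mult_assoc[symmetric] assms)
  finally show ?thesis .
qed

lemma mat_inv_unique_right:
  assumes "g \<in> GL" "mat_mult g h = mat_one"
  shows "h = mat_inv g"
proof -
  have "h = mat_mult (mat_mult (mat_inv g) g) h"
    by (simp add: GL_mat_inv assms)
  also have "\<dots> = mat_inv g"
    by (simp add: mat_mult_assoc assms)
  finally show ?thesis .
qed

lemma mat_inv_mult:
  assumes "g \<in> GL" "h \<in> GL"
  shows "mat_inv (mat_mult g h) = mat_mult (mat_inv h) (mat_inv g)"
proof -
  have "mat_mult (mat_mult (mat_inv h) (mat_inv g)) (mat_mult g h)
      = mat_mult (mat_inv h) (mat_mult (mat_mult (mat_inv g) g) h)"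
    by (simp only: mat_mult_assoc)
  then have "mat_mult (mat_mult (mat_inv h) (mat_inv g)) (mat_mult g h) = mat_one"
    by (simp add: GL_mat_inv assms)
  then show ?thesis
    using mat_inv_unique_left[OF GL_mult[OF assms]] by simp
qed

lemma mat_inv_one [simp]: "mat_inv mat_one = mat_one"
  by (rule sym, rule mat_inv_unique_left) simp_all

definition vec_of_mat :: "('k::comm_ring_1,'n::finite) mat \<Rightarrow> 'k^'n^'n" where
  "vec_of_mat M = (\<chi> i j. M i j)"

lemma vec_of_mat_mult: "vec_of_mat (mat_mult A B) = vec_of_mat A ** vec_of_mat B"
  unfolding vec_of_mat_def mat_mult_def matrix_matrix_mult_def by (simp add: vec_eq_iff)

lemma vec_of_mat_one: "vec_of_mat mat_one = mat 1"
  unfolding vec_of_mat_def mat_one_def mat_def by (simp add: vec_eq_iff)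

lemma vec_of_mat_inject: "vec_of_mat A = vec_of_mat B \<Longrightarrow> A = B"
  unfolding vec_of_mat_def by (simp add: vec_eq_iff fun_eq_iff)

lemma mat_mult_eq_one_commute:
  fixes A B :: "('k::field,'n::finite) mat"
  assumes "mat_mult A B = mat_one"
  shows "mat_mult B A = mat_one"
proof -
  have "vec_of_mat A ** vec_of_mat B = mat 1"
    using assms by (metis vec_of_mat_mult vec_of_mat_one)
  then have "vec_of_mat (mat_mult B A) = vec_of_mat mat_one"
    by (simp add: vec_of_mat_mult vec_of_mat_one matrix_left_right_inverse)
  then show ?thesis
    by (rule vec_of_mat_inject)
qed

lemma det_nonzero_imp_GL:
  fixes g :: "('k::field,'n::finite) mat"
  assumes "det (vec_of_mat g) \<noteq> 0"
  shows "g \<in> GL"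
proof -
  obtain B where "vec_of_mat g ** B = mat 1"
    using assms by (metis invertible_det_nz invertible_def)
  moreover have "vec_of_mat (\<lambda>i j. B $ i $ j) = B"
    by (simp add: vec_of_mat_def vec_eq_iff)
  ultimately have "mat_mult g (\<lambda>i j. B $ i $ j) = mat_one"
    by (intro vec_of_mat_inject) (simp add: vec_of_mat_mult vec_of_mat_one)
  then show ?thesis
    unfolding GL_def using mat_mult_eq_one_commute by blast
qed


section \<open>The action of \<open>GL(V)\<close> on \<open>M\<close>\<close>

text \<open>The action factors through the three mode products, one for each tensor slot.\<close>

definition mode1 :: "('k::comm_ring_1,'n::finite) mat \<Rightarrow> ('k,'n) tensor \<Rightarrow> ('k,'n) tensor" where
  "mode1 P m = (\<lambda>i j k. \<Sum>a\<in>UNIV. P a i * m a j k)"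

definition mode2 :: "('k::comm_ring_1,'n::finite) mat \<Rightarrow> ('k,'n) tensor \<Rightarrow> ('k,'n) tensor" where
  "mode2 P m = (\<lambda>i j k. \<Sum>b\<in>UNIV. P b j * m i b k)"

definition mode3 :: "('k::comm_ring_1,'n::finite) mat \<Rightarrow> ('k,'n) tensor \<Rightarrow> ('k,'n) tensor" where
  "mode3 P m = (\<lambda>i j k. \<Sum>c\<in>UNIV. P k c * m i j c)"

lemma act_eq_modes: "act g m = mode1 (mat_inv g) (mode2 (mat_inv g) (mode3 g m))"
  unfolding act_def mode1_def mode2_def mode3_def
  by (intro ext) (simp add: sum_distrib_left mult_ac)

lemma mode1_mode1: "mode1 P (mode1 Q m) = mode1 (mat_mult Q P) m"
  unfolding mode1_def mat_mult_def
  by (intro ext) (simp add: sum_distrib_left sum_distrib_right mult_ac, rule sum.swap)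

lemma mode2_mode2: "mode2 P (mode2 Q m) = mode2 (mat_mult Q P) m"
  unfolding mode2_def mat_mult_def
  by (intro ext) (simp add: sum_distrib_left sum_distrib_right mult_ac, rule sum.swap)

lemma mode3_mode3: "mode3 P (mode3 Q m) = mode3 (mat_mult P Q) m"
  unfolding mode3_def mat_mult_def
  by (intro ext) (simp add: sum_distrib_left sum_distrib_right mult_ac, rule sum.swap)

lemma mode1_mode2_commute: "mode1 P (mode2 Q m) = mode2 Q (mode1 P m)"
  unfolding mode1_def mode2_def
  by (intro ext) (simp add: sum_distrib_left mult_ac, rule sum.swap)

lemma mode1_mode3_commute: "mode1 P (mode3 Q m) = mode3 Q (mode1 P m)"
  unfolding mode1_def mode3_def
  by (intro ext) (simp add: sum_distrib_left mult_ac, rule sum.swap)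

lemma mode2_mode3_commute: "mode2 P (mode3 Q m) = mode3 Q (mode2 P m)"
  unfolding mode2_def mode3_def
  by (intro ext) (simp add: sum_distrib_left mult_ac, rule sum.swap)

lemma mode1_one [simp]: "mode1 mat_one m = m"
  unfolding mode1_def mat_one_def by (intro ext) simp

lemma mode2_one [simp]: "mode2 mat_one m = m"
  unfolding mode2_def mat_one_def by (intro ext) simp

lemma mode3_one [simp]: "mode3 mat_one m = m"
  unfolding mode3_def mat_one_def by (intro ext) simp

lemma act_one [simp]: "act mat_one m = m"
  by (simp add: act_eq_modes)

lemma act_act:
  assumes "g \<in> GL" "h \<in> GL"
  shows "act g (act h m) = act (mat_mult g h) m"
proof -
  have "act g (act h m) = mode1 (mat_inv g) (mode2 (mat_inv g) (mode3 g
          (mode1 (mat_inv h) (mode2 (mat_inv h) (mode3 h m)))))"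
    by (simp add: act_eq_modes)
  also have "\<dots> = mode1 (mat_inv g) (mode1 (mat_inv h)
      (mode2 (mat_inv g) (mode2 (mat_inv h) (mode3 g (mode3 h m)))))"
    by (simp add: mode1_mode2_commute mode1_mode3_commute mode2_mode3_commute)
  also have "\<dots> = act (mat_mult g h) m"
    by (simp add: act_eq_modes mode1_mode1 mode2_mode2 mode3_mode3 mat_inv_mult assms)
  finally show ?thesis .
qed

lemma act_mat_inv_act:
  assumes "g \<in> GL"
  shows "act (mat_inv g) (act g m) = m"
  by (simp add: act_act GL_mat_inv GL_mat_inv_closed assms)

lemma polyfun_act: "p \<in> polyfun \<Longrightarrow> (\<lambda>m. p (act g m)) \<in> polyfun"
  by (erule polyfun_compose, unfold act_def)
    (intro polyfun_sum polyfun.mult polyfun.const polyfun.coord; simp)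

section \<open>Rational functions on a subset of \<open>M\<close>\<close>

definition rational_on :: "('k::field,'n) tensor set \<Rightarrow> (('k,'n) tensor \<Rightarrow> 'k) \<Rightarrow> bool" where
  "rational_on U f \<longleftrightarrow>
     (\<exists>P Q. P \<in> polyfun \<and> Q \<in> polyfun \<and> (\<forall>m\<in>U. Q m \<noteq> 0 \<and> f m = P m / Q m))"

lemma polyfun_imp_rational_on: "p \<in> polyfun \<Longrightarrow> rational_on U p"
  unfolding rational_on_def by (intro exI[of _ p] exI[of _ "\<lambda>_. 1"]) (simp add: polyfun.const)

lemma rational_on_const: "rational_on U (\<lambda>_. c)"
  by (rule polyfun_imp_rational_on) (rule polyfun.const)

lemma rational_on_coord: "rational_on U (\<lambda>m. m i j k)"
  by (rule polyfun_imp_rational_on) (rule polyfun.coord)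

lemma rational_on_cong: "rational_on U f \<Longrightarrow> (\<And>m. m \<in> U \<Longrightarrow> f m = g m) \<Longrightarrow> rational_on U g"
  unfolding rational_on_def by metis

lemma rational_on_add:
  assumes "rational_on U f" "rational_on U g"
  shows "rational_on U (\<lambda>m. f m + g m)"
proof -
  obtain P Q where f: "P \<in> polyfun" "Q \<in> polyfun" "\<forall>m\<in>U. Q m \<noteq> 0 \<and> f m = P m / Q m"
    using assms(1) unfolding rational_on_def by blast
  obtain P' Q' where g: "P' \<in> polyfun" "Q' \<in> polyfun" "\<forall>m\<in>U. Q' m \<noteq> 0 \<and> g m = P' m / Q' m"
    using assms(2) unfolding rational_on_def by blast
  have "(\<lambda>m. P m * Q' m + P' m * Q m) \<in> polyfun" "(\<lambda>m. Q m * Q' m) \<in> polyfun"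
    using f g by (auto intro!: polyfun.add polyfun.mult)
  moreover have "\<forall>m\<in>U. Q m * Q' m \<noteq> 0 \<and> f m + g m = (P m * Q' m + P' m * Q m) / (Q m * Q' m)"
    using f g by (simp add: field_simps)
  ultimately show ?thesis
    unfolding rational_on_def by blast
qed

lemma rational_on_mult:
  assumes "rational_on U f" "rational_on U g"
  shows "rational_on U (\<lambda>m. f m * g m)"
proof -
  obtain P Q where f: "P \<in> polyfun" "Q \<in> polyfun" "\<forall>m\<in>U. Q m \<noteq> 0 \<and> f m = P m / Q m"
    using assms(1) unfolding rational_on_def by blast
  obtain P' Q' where g: "P' \<in> polyfun" "Q' \<in> polyfun" "\<forall>m\<in>U. Q' m \<noteq> 0 \<and> g m = P' m / Q' m"
    using assms(2) unfolding rational_on_def by blast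
  have "(\<lambda>m. P m * P' m) \<in> polyfun" "(\<lambda>m. Q m * Q' m) \<in> polyfun"
    using f g by (auto intro!: polyfun.mult)
  moreover have "\<forall>m\<in>U. Q m * Q' m \<noteq> 0 \<and> f m * g m = (P m * P' m) / (Q m * Q' m)"
    using f g by simp
  ultimately show ?thesis
    unfolding rational_on_def by blast
qed

lemma rational_on_divide:
  assumes "rational_on U f" "rational_on U g" "\<And>m. m \<in> U \<Longrightarrow> g m \<noteq> 0"
  shows "rational_on U (\<lambda>m. f m / g m)"
proof -
  obtain P Q where f: "P \<in> polyfun" "Q \<in> polyfun" "\<forall>m\<in>U. Q m \<noteq> 0 \<and> f m = P m / Q m"
    using assms(1) unfolding rational_on_def by blast
  obtain P' Q' where g: "P' \<in> polyfun" "Q' \<in> polyfun" "\<forall>m\<in>U. Q' m \<noteq> 0 \<and> g m = P' m / Q' m"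
    using assms(2) unfolding rational_on_def by blast
  have "(\<lambda>m. P m * Q' m) \<in> polyfun" "(\<lambda>m. Q m * P' m) \<in> polyfun"
    using f g by (auto intro!: polyfun.mult)
  moreover have "\<forall>m\<in>U. Q m * P' m \<noteq> 0 \<and> f m / g m = (P m * Q' m) / (Q m * P' m)"
    using f g assms(3) by (auto simp: field_simps)
  ultimately show ?thesis
    unfolding rational_on_def by blast
qed

lemma rational_on_sum:
  "finite A \<Longrightarrow> (\<And>a. a \<in> A \<Longrightarrow> rational_on U (\<lambda>m. F a m)) \<Longrightarrow> rational_on U (\<lambda>m. \<Sum>a\<in>A. F a m)"
proof (induction A rule: finite_induct)
  case empty
  then show ?case using rational_on_const[of U 0] by simp
next
  case (insert x A)
  then show ?case using rational_on_add[of U "F x" "\<lambda>m. \<Sum>a\<in>A. F a m"] by simp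
qed

lemma rational_on_prod:
  "finite A \<Longrightarrow> (\<And>a. a \<in> A \<Longrightarrow> rational_on U (\<lambda>m. F a m)) \<Longrightarrow> rational_on U (\<lambda>m. \<Prod>a\<in>A. F a m)"
proof (induction A rule: finite_induct)
  case empty
  then show ?case using rational_on_const[of U 1] by simp
next
  case (insert x A)
  then show ?case using rational_on_mult[of U "F x" "\<lambda>m. \<Prod>a\<in>A. F a m"] by simp
qed

lemma rational_on_compose:
  assumes "p \<in> polyfun" "\<And>i j c. rational_on U (\<lambda>m. F m i j c)"
  shows "rational_on U (\<lambda>m. p (F m))"
  using assms(1)
proof induction
  case (const c)
  then show ?case by (rule rational_on_const)
next
  case (coord i j k)
  then show ?case by (rule assms(2))
next
  case (add p q)
  then show ?case using rational_on_add[of U "\<lambda>m. p (F m)" "\<lambda>m. q (F m)"] by simp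
next
  case (mult p q)
  then show ?case using rational_on_mult[of U "\<lambda>m. p (F m)" "\<lambda>m. q (F m)"] by simp
qed

lemma rational_on_det:
  fixes M :: "('k::field,'n) tensor \<Rightarrow> 'k^'m::finite^'m"
  assumes "\<And>i j. rational_on U (\<lambda>m. M m $ i $ j)"
  shows "rational_on U (\<lambda>m. det (M m))"
  unfolding det_def
  by (intro rational_on_sum rational_on_mult rational_on_const rational_on_prod) (simp_all add: assms)

lemma rational_on_solution:
  fixes M :: "('k::field,'n) tensor \<Rightarrow> 'k^'m::finite^'m" and b x :: "('k,'n) tensor \<Rightarrow> 'k^'m"
  assumes M: "\<And>i j. rational_on U (\<lambda>m. M m $ i $ j)" and b: "\<And>i. rational_on U (\<lambda>m. b m $ i)"
    and det: "\<And>m. m \<in> U \<Longrightarrow> det (M m) \<noteq> 0"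
    and solution: "\<And>m. m \<in> U \<Longrightarrow> M m *v x m = b m"
  shows "rational_on U (\<lambda>m. x m $ k)"
proof (rule rational_on_cong)
  have entries: "rational_on U (\<lambda>m. (\<chi> i j. if j = k then b m $ i else M m $ i $ j) $ i $ j)" for i j
    by (cases "j = k") (simp_all add: M b)
  show "rational_on U (\<lambda>m. det (\<chi> i j. if j = k then b m $ i else M m $ i $ j) / det (M m))"
    by (intro rational_on_divide rational_on_det det entries M)
  show "det (\<chi> i j. if j = k then b m $ i else M m $ i $ j) / det (M m) = x m $ k" if "m \<in> U" for m
    using cramer[OF det[OF that]] solution[OF that] by simp
qed

lemma rational_on_act:
  assumes "p \<in> polyfun"
    and "\<And>i j. rational_on U (\<lambda>m. G m i j)" "\<And>i j. rational_on U (\<lambda>m. mat_inv (G m) i j)"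
  shows "rational_on U (\<lambda>m. p (act (G m) m))"
  by (rule rational_on_compose[OF assms(1)], unfold act_def)
    (intro rational_on_sum rational_on_mult rational_on_coord; simp add: assms(2,3))


section \<open>Slices with a rational normalizer\<close>

lemma zariski_open_nonzero_locus: "D \<in> polyfun \<Longrightarrow> zariski_open {m. D m \<noteq> 0}"
  unfolding zariski_open_def zariski_closed_def by (intro exI[of _ "{D}"]) auto

lemma zariski_dense_nonzero_locus:
  fixes D :: "('k::field,'n) tensor \<Rightarrow> 'k"
  assumes "infinite (UNIV :: 'k set)" "D \<in> polyfun" "D a \<noteq> 0"
  shows "zariski_dense {m. D m \<noteq> 0}"
  unfolding zariski_dense_def
proof (intro allI impI)
  fix W :: "('k,'n) tensor set"
  assume "zariski_open W \<and> W \<noteq> {}"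
  then obtain F w where F: "F \<subseteq> polyfun" "- W = {m. \<forall>f\<in>F. f m = 0}" and "w \<in> W"
    unfolding zariski_open_def zariski_closed_def by blast
  then obtain f where f: "f \<in> F" "f w \<noteq> 0"
    by blast
  then obtain m where "f m \<noteq> 0" "D m \<noteq> 0"
    using polyfun_common_nonzero[OF assms(1), of f D w a] F(1) assms(2,3) by blast
  then show "W \<inter> {m. D m \<noteq> 0} \<noteq> {}"
    using F f by blast
qed

lemma cross_mult_eq_trans:
  fixes x1 x2 :: "'a::field"
  assumes "x1 \<noteq> 0" "x2 \<noteq> 0" "P1 * q1 = p1 * x1" "P2 * q2 = p2 * x2" "P1 * x2 = P2 * x1"
  shows "p1 * q2 = p2 * q1"
proof -
  have "p1 * q2 = P1 / x1 * (q1 * q2)" "p2 * q1 = P2 / x2 * (q1 * q2)"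
    using assms(1-4) by (simp_all add: field_simps)
  moreover have "P1 / x1 = P2 / x2"
    using assms(1,2,5) by (simp add: field_simps)
  ultimately show ?thesis
    by simp
qed

lemma ratM_inv_iff:
  "(p, q) \<in> ratM_inv \<longleftrightarrow> p \<in> polyfun \<and> q \<in> polyfun \<and> (\<exists>m. q m \<noteq> 0) \<and>
     (\<forall>g\<in>GL. \<forall>m. p (act g m) * q m = p m * q (act g m))"
  unfolding ratM_inv_def ratM_def eqM_def by auto

locale rational_slice =
  fixes r :: "('k::field,'n::finite) tensor \<Rightarrow> ('k,'n) tensor"
    and D :: "('k,'n) tensor \<Rightarrow> 'k"
    and \<gamma> :: "('k,'n) tensor \<Rightarrow> ('k,'n) mat"
    and base :: "('k,'n) tensor"
  assumes field_infinite: "infinite (UNIV :: 'k set)"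
    and polyfun_retraction: "\<And>i j c. (\<lambda>m. r m i j c) \<in> polyfun"
    and retraction_idem: "\<And>m. r (r m) = r m"
    and polyfun_D: "D \<in> polyfun"
    and base_fixed: "r base = base"
    and D_base: "D base \<noteq> 0"
    and normalizer_GL: "\<And>m. D m \<noteq> 0 \<Longrightarrow> \<gamma> m \<in> GL"
    and normalizer_to_slice: "\<And>m. D m \<noteq> 0 \<Longrightarrow> r (act (\<gamma> m) m) = act (\<gamma> m) m"
    and normalizer_unique:
      "\<And>m g. D m \<noteq> 0 \<Longrightarrow> g \<in> GL \<Longrightarrow> r (act g m) = act g m \<Longrightarrow> g = \<gamma> m"
    and rational_normalizer: "\<And>i j. rational_on {m. D m \<noteq> 0} (\<lambda>m. \<gamma> m i j)"
    and rational_normalizer_inv: "\<And>i j. rational_on {m. D m \<noteq> 0} (\<lambda>m. mat_inv (\<gamma> m) i j)"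
begin

abbreviation slice :: "('k,'n) tensor set" where
  "slice \<equiv> {m. r m = m}"

abbreviation normalize :: "('k,'n) tensor \<Rightarrow> ('k,'n) tensor" where
  "normalize m \<equiv> act (\<gamma> m) m"

lemma polyfun_compose_retraction: "p \<in> polyfun \<Longrightarrow> (\<lambda>m. p (r m)) \<in> polyfun"
  using polyfun_compose[of p r] polyfun_retraction by blast

lemma slice_common_nonzero:
  assumes "p \<in> polyfun" "q \<in> polyfun" "a \<in> slice" "p a \<noteq> 0" "b \<in> slice" "q b \<noteq> 0"
  shows "\<exists>m\<in>slice. p m \<noteq> 0 \<and> q m \<noteq> 0"
proof -
  obtain m where "p (r m) \<noteq> 0" "q (r m) \<noteq> 0"
    using polyfun_common_nonzero[OF field_infinite polyfun_compose_retraction[OF assms(1)]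
        polyfun_compose_retraction[OF assms(2)], of a b] assms(3-6) by auto
  then show ?thesis
    using retraction_idem by blast
qed

lemma slice_vanishing:
  assumes "F \<in> polyfun" "\<And>s. s \<in> slice \<Longrightarrow> D s \<noteq> 0 \<Longrightarrow> F s = 0" "s \<in> slice"
  shows "F s = 0"
proof -
  have "F (r s) = 0"
  proof (rule polyfun_vanishes_from_nonzero_locus[OF field_infinite
        polyfun_compose_retraction[OF assms(1)] polyfun_compose_retraction[OF polyfun_D]])
    show "D (r base) \<noteq> 0"
      by (simp add: base_fixed D_base)
    show "F (r m) = 0" if "D (r m) \<noteq> 0" for m
      using assms(2) retraction_idem that by simp
  qed
  then show ?thesis
    using assms(3) by simp
qed

lemma normalize_slice_point:
  assumes "s \<in> slice" "D s \<noteq> 0"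
  shows "normalize s = s"
proof -
  have "mat_one = \<gamma> s"
    using normalizer_unique[OF assms(2) GL_one] assms(1) by simp
  then show ?thesis
    by (metis act_one)
qed

lemma normalize_act:
  assumes "D m \<noteq> 0" "g \<in> GL" "D (act g m) \<noteq> 0"
  shows "normalize (act g m) = normalize m"
proof -
  define h where "h = mat_mult (\<gamma> m) (mat_inv g)"
  have h: "h \<in> GL"
    unfolding h_def by (intro GL_mult GL_mat_inv_closed normalizer_GL assms)
  have "mat_mult h g = \<gamma> m"
    unfolding h_def by (simp add: mat_mult_assoc GL_mat_inv assms)
  then have "act h (act g m) = normalize m"
    using act_act[OF h assms(2)] by simp
  moreover from this have "h = \<gamma> (act g m)"
    using normalizer_unique[OF assms(3) h] normalizer_to_slice[OF assms(1)] by simp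
  ultimately show ?thesis
    by simp
qed

lemma rational_on_normalize: "p \<in> polyfun \<Longrightarrow> rational_on {m. D m \<noteq> 0} (\<lambda>m. p (normalize m))"
  by (rule rational_on_act[OF _ rational_normalizer rational_normalizer_inv])

lemma normalize_nonvanishing_locus:
  assumes "q \<in> polyfun" "s \<in> slice" "D s \<noteq> 0" "q s \<noteq> 0"
  shows "\<exists>E\<in>polyfun. E s \<noteq> 0 \<and> (\<forall>m. E m \<noteq> 0 \<longrightarrow> D m \<noteq> 0 \<and> q (normalize m) \<noteq> 0)"
proof -
  obtain P Q where PQ: "P \<in> polyfun" "\<And>m. D m \<noteq> 0 \<Longrightarrow> Q m \<noteq> 0 \<and> q (normalize m) = P m / Q m"
    using rational_on_normalize[OF assms(1)] unfolding rational_on_def by auto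
  have "P s \<noteq> 0"
    using PQ(2)[OF assms(3)] normalize_slice_point[OF assms(2,3)] assms(4) by auto
  then show ?thesis
    using PQ assms(3) by (intro bexI[of _ "\<lambda>m. D m * P m"]) (auto intro: polyfun.mult polyfun_D)
qed

text \<open>\<open>F / G\<close> represents \<open>\<phi>(normalize m) / \<psi>(normalize m)\<close>, invariant because \<open>normalize\<close> is constant on orbits.\<close>

lemma invariant_of_normalize:
  assumes "F \<in> polyfun" "G \<in> polyfun" "g \<in> GL"
    and F: "\<And>m. D m \<noteq> 0 \<Longrightarrow> F m = \<phi> (normalize m) * c m"
    and G: "\<And>m. D m \<noteq> 0 \<Longrightarrow> G m = \<psi> (normalize m) * c m"
  shows "F (act g m) * G m = F m * G (act g m)"
proof -
  have "D (act g (act (mat_inv g) base)) \<noteq> 0"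
    by (simp add: act_act GL_mat_inv GL_mat_inv_closed assms(3) D_base)
  then obtain a where "D a \<noteq> 0 \<and> D (act g a) \<noteq> 0"
    using polyfun_common_nonzero[where p = D and q = "\<lambda>m. D (act g m)" and a = base]
      field_infinite polyfun_D polyfun_act[OF polyfun_D] D_base by blast
  moreover have "F (act g m) * G m - F m * G (act g m) = 0" if "D m * D (act g m) \<noteq> 0" for m
    using that F G normalize_act[OF _ assms(3)] by (simp add: ac_simps)
  moreover note polyfun_vanishes_from_nonzero_locus[OF field_infinite
      polyfun_diff[OF polyfun.mult[OF polyfun_act[OF assms(1), of g] assms(2)]
        polyfun.mult[OF assms(1) polyfun_act[OF assms(2), of g]]]
      polyfun.mult[OF polyfun_D polyfun_act[OF polyfun_D, of g]], of a]
  ultimately have "F (act g m) * G m - F m * G (act g m) = 0"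
    by simp
  then show ?thesis
    by simp
qed

lemma slice_irreducible: "irreducible_set slice"
  unfolding irreducible_set_def
proof (intro conjI allI impI)
  show "slice \<noteq> {}"
    using base_fixed by auto
  fix Z1 Z2 :: "('k,'n) tensor set"
  assume Z: "zariski_closed Z1 \<and> zariski_closed Z2 \<and> slice \<subseteq> Z1 \<union> Z2"
  then obtain F1 F2 where F: "F1 \<subseteq> polyfun" "Z1 = {m. \<forall>f\<in>F1. f m = 0}"
    "F2 \<subseteq> polyfun" "Z2 = {m. \<forall>f\<in>F2. f m = 0}"
    unfolding zariski_closed_def by blast
  show "slice \<subseteq> Z1 \<or> slice \<subseteq> Z2"
  proof (rule ccontr)
    assume "\<not> ?thesis"
    then obtain s1 s2 f1 f2 where s: "s1 \<in> slice" "f1 \<in> F1" "f1 s1 \<noteq> 0"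
      "s2 \<in> slice" "f2 \<in> F2" "f2 s2 \<noteq> 0"
      using F by blast
    then obtain m where "m \<in> slice" "f1 m \<noteq> 0" "f2 m \<noteq> 0"
      using slice_common_nonzero[of f1 f2] F by blast
    moreover from this have "m \<in> Z1 \<union> Z2"
      using Z by blast
    ultimately show False
      using F s by auto
  qed
qed

lemma restriction_defined:
  assumes "f \<in> ratM_inv"
  shows "\<exists>f'\<in>ratS slice. eqM f f'"
proof -
  obtain p q where f: "f = (p, q)"
    by fastforce
  then have pq: "p \<in> polyfun" "q \<in> polyfun" "\<exists>m. q m \<noteq> 0"
    and inv: "\<And>g m. g \<in> GL \<Longrightarrow> p (act g m) * q m = p m * q (act g m)"
    using assms by (auto simp: ratM_inv_iff)
  then obtain m1 where "q m1 \<noteq> 0"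
    by blast
  then obtain m where m: "q m \<noteq> 0" "D m \<noteq> 0"
    using polyfun_common_nonzero[where p = q and q = D and b = base]
      field_infinite pq(2) polyfun_D D_base by blast
  define h where "h = mat_inv (\<gamma> m)"
  have h: "h \<in> GL"
    unfolding h_def by (intro GL_mat_inv_closed normalizer_GL m)
  have "act h (normalize m) = m"
    unfolding h_def by (rule act_mat_inv_act[OF normalizer_GL[OF m(2)]])
  then have "normalize m \<in> slice" "q (act h (normalize m)) \<noteq> 0"
    using normalizer_to_slice m by auto
  then have "(\<lambda>m. p (act h m), \<lambda>m. q (act h m)) \<in> ratS slice"
    unfolding ratS_def using polyfun_act pq(1,2) by blast
  moreover have "eqM f (\<lambda>m. p (act h m), \<lambda>m. q (act h m))"
    using inv[OF h] unfolding eqM_def f by (simp add: mult.commute)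
  ultimately show ?thesis
    by blast
qed

lemma restriction_injective:
  assumes f1: "f1 \<in> ratM_inv \<inter> ratS slice" and f2: "f2 \<in> ratM_inv \<inter> ratS slice"
    and eq: "eqS slice f1 f2"
  shows "eqM f1 f2"
proof -
  obtain p1 q1 p2 q2 where f: "f1 = (p1, q1)" "f2 = (p2, q2)"
    by fastforce
  have pq: "p1 \<in> polyfun" "q1 \<in> polyfun" "p2 \<in> polyfun" "q2 \<in> polyfun"
    and inv1: "\<And>g m. g \<in> GL \<Longrightarrow> p1 (act g m) * q1 m = p1 m * q1 (act g m)"
    and inv2: "\<And>g m. g \<in> GL \<Longrightarrow> p2 (act g m) * q2 m = p2 m * q2 (act g m)"
    using f1 f2 by (auto simp: f ratM_inv_iff)
  obtain s1 s2 where "s1 \<in> slice" "q1 s1 \<noteq> 0" "s2 \<in> slice" "q2 s2 \<noteq> 0"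
    using f1 f2 by (auto simp: f ratS_def)
  then obtain s' where "s' \<in> slice" "q1 s' * q2 s' \<noteq> 0"
    using slice_common_nonzero[OF pq(2,4)] by fastforce
  then obtain s where s: "s \<in> slice" "q1 s \<noteq> 0" "q2 s \<noteq> 0" "D s \<noteq> 0"
    using slice_common_nonzero[OF polyfun.mult[OF pq(2,4)] polyfun_D _ _ _ D_base] base_fixed by auto
  obtain E1 where E1: "E1 \<in> polyfun" "E1 s \<noteq> 0" "\<And>m. E1 m \<noteq> 0 \<Longrightarrow> D m \<noteq> 0 \<and> q1 (normalize m) \<noteq> 0"
    using normalize_nonvanishing_locus[OF pq(2) s(1,4,2)] by blast
  obtain E2 where E2: "E2 \<in> polyfun" "E2 s \<noteq> 0" "\<And>m. E2 m \<noteq> 0 \<Longrightarrow> q2 (normalize m) \<noteq> 0"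
    using normalize_nonvanishing_locus[OF pq(4) s(1,4,3)] by blast
  have "p1 m * q2 m - p2 m * q1 m = 0" if "E1 m * E2 m \<noteq> 0" for m
  proof -
    have g: "\<gamma> m \<in> GL" and t: "q1 (normalize m) \<noteq> 0" "q2 (normalize m) \<noteq> 0"
      and "p1 (normalize m) * q2 (normalize m) = p2 (normalize m) * q1 (normalize m)"
      using that E1(3) E2(3) normalizer_GL normalizer_to_slice eq by (auto simp: eqS_def f)
    then show ?thesis
      using cross_mult_eq_trans[OF t inv1[OF g, of m] inv2[OF g, of m]] by simp
  qed
  moreover note polyfun_vanishes_from_nonzero_locus[OF field_infinite
      polyfun_diff[OF polyfun.mult[OF pq(1,4)] polyfun.mult[OF pq(3,2)]] polyfun.mult[OF E1(1) E2(1)], of s]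
  ultimately have "p1 m * q2 m - p2 m * q1 m = 0" for m
    using E1(2) E2(2) by simp
  then show ?thesis
    by (simp add: eqM_def f mult.commute)
qed

lemma restriction_surjective:
  assumes "h \<in> ratS slice"
  shows "\<exists>f\<in>ratM_inv \<inter> ratS slice. eqS slice f h"
proof -
  obtain p q where h: "h = (p, q)"
    by fastforce
  have pq: "p \<in> polyfun" "q \<in> polyfun" "\<exists>s\<in>slice. q s \<noteq> 0"
    using assms by (auto simp: h ratS_def)
  obtain P Q1 where P: "P \<in> polyfun" "Q1 \<in> polyfun"
    "\<And>m. D m \<noteq> 0 \<Longrightarrow> Q1 m \<noteq> 0 \<and> p (normalize m) = P m / Q1 m"
    using rational_on_normalize[OF pq(1)] unfolding rational_on_def by blast
  obtain P2 Q2 where Q: "P2 \<in> polyfun" "Q2 \<in> polyfun"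
    "\<And>m. D m \<noteq> 0 \<Longrightarrow> Q2 m \<noteq> 0 \<and> q (normalize m) = P2 m / Q2 m"
    using rational_on_normalize[OF pq(2)] unfolding rational_on_def by blast
  define F where "F m = P m * Q2 m" for m
  define G where "G m = P2 m * Q1 m" for m
  have FG: "F \<in> polyfun" "G \<in> polyfun"
    unfolding F_def G_def by (fact polyfun.mult[OF P(1) Q(2)], fact polyfun.mult[OF Q(1) P(2)])
  have F: "F m = p (normalize m) * (Q1 m * Q2 m)" and G: "G m = q (normalize m) * (Q1 m * Q2 m)"
    if "D m \<noteq> 0" for m
    using P(3)[OF that] Q(3)[OF that] by (auto simp: F_def G_def field_simps)
  obtain s where s: "s \<in> slice" "q s \<noteq> 0" "D s \<noteq> 0"
    using pq slice_common_nonzero[OF pq(2) polyfun_D _ _ _ D_base] base_fixed by auto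
  have "G s \<noteq> 0"
    using G[OF s(3)] P(3)[OF s(3)] Q(3)[OF s(3)] normalize_slice_point[OF s(1,3)] s(2) by auto
  then have "(F, G) \<in> ratM_inv \<inter> ratS slice"
    using FG s(1) invariant_of_normalize[OF FG _ F G] by (auto simp: ratM_inv_iff ratS_def)
  moreover have "F s * q s - p s * G s = 0" if "s \<in> slice" for s
  proof (rule slice_vanishing[OF _ _ that])
    show "(\<lambda>s. F s * q s - p s * G s) \<in> polyfun"
      by (rule polyfun_diff[OF polyfun.mult[OF FG(1) pq(2)] polyfun.mult[OF pq(1) FG(2)]])
    show "F s' * q s' - p s' * G s' = 0" if "s' \<in> slice" "D s' \<noteq> 0" for s'
      using F[OF that(2)] G[OF that(2)] normalize_slice_point[OF that] by simp
  qed
  then have "eqS slice (F, G) h"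
    by (simp add: eqS_def h)
  ultimately show ?thesis
    by blast
qed

lemma slice_restriction_iso: "restriction_iso slice"
  unfolding restriction_iso_def
  by (intro conjI ballI impI restriction_defined restriction_injective restriction_surjective)

lemma normalizer_ex1:
  assumes "D a \<noteq> 0"
  shows "\<exists>!g. g \<in> GL \<and> act g a \<in> slice"
proof (rule ex1I[of _ "\<gamma> a"])
  show "\<gamma> a \<in> GL \<and> act (\<gamma> a) a \<in> slice"
    using normalizer_GL normalizer_to_slice assms by simp
  show "g = \<gamma> a" if "g \<in> GL \<and> act g a \<in> slice" for g
    using normalizer_unique[OF assms] that by simp
qed

lemma slice_eq_coordinate_equations:
  "{m. \<forall>s\<in>{f. \<exists>i j c. f = (\<lambda>m. m i j c - r m i j c) \<and> nonconstant f}. s m = 0} = slice"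
proof -
  have "r m i j c = m i j c" if "\<forall>s\<in>{f. \<exists>i j c. f = (\<lambda>m. m i j c - r m i j c) \<and> nonconstant f}. s m = 0"
    for m i j c
  proof (cases "nonconstant (\<lambda>m. m i j c - r m i j c)")
    case True
    then show ?thesis using that by force
  next
    case False
    then have "m i j c - r m i j c = base i j c - r base i j c"
      unfolding nonconstant_def by blast
    then show ?thesis
      using base_fixed by simp
  qed
  then show ?thesis
    by (auto intro!: ext)
qed

lemma D_nonvanishing_locus: "{m. \<forall>t\<in>(if nonconstant D then {D} else {}). t m \<noteq> 0} = {m. D m \<noteq> 0}"
proof (cases "nonconstant D")
  case False
  then have "D m \<noteq> 0" for m
    using D_base unfolding nonconstant_def by metis
  then show ?thesis
    using False by simp
qed simp

theorem slice_theorem: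
  "\<exists>(Sp :: (('k,'n) tensor \<Rightarrow> 'k) set) (Tq :: (('k,'n) tensor \<Rightarrow> 'k) set).
     finite Sp \<and> finite Tq \<and> Sp \<subseteq> polyfun \<and> Tq \<subseteq> polyfun \<and>
     (\<forall>s\<in>Sp. nonconstant s) \<and> (\<forall>t\<in>Tq. nonconstant t) \<and>
     (let S = {m. \<forall>s\<in>Sp. s m = 0}; U = {m. \<forall>t\<in>Tq. t m \<noteq> 0} in
        irreducible_set S \<and> restriction_iso S \<and>
        zariski_open U \<and> zariski_dense U \<and>
        (\<forall>a\<in>U. \<exists>!g. g \<in> GL \<and> act g a \<in> S))"
proof (intro exI conjI)
  let ?Sp = "{f. \<exists>i j c. f = (\<lambda>m. m i j c - r m i j c) \<and> nonconstant f}"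
  let ?Tq = "if nonconstant D then {D} else {}"
  have "?Sp \<subseteq> (\<lambda>(i, j, c). (\<lambda>m. m i j c - r m i j c)) ` UNIV"
    by (auto intro!: image_eqI[where x = "(_, _, _)"])
  then show "finite ?Sp"
    by (rule finite_subset) simp
  show "finite ?Tq" "?Tq \<subseteq> polyfun" "\<forall>s\<in>?Sp. nonconstant s" "\<forall>t\<in>?Tq. nonconstant t"
    using polyfun_D by auto
  show "?Sp \<subseteq> polyfun"
    using polyfun_retraction by (auto intro!: polyfun_diff polyfun.coord)
  show "let S = {m. \<forall>s\<in>?Sp. s m = 0}; U = {m. \<forall>t\<in>?Tq. t m \<noteq> 0} in
      irreducible_set S \<and> restriction_iso S \<and> zariski_open U \<and> zariski_dense U \<and>
      (\<forall>a\<in>U. \<exists>!g. g \<in> GL \<and> act g a \<in> S)"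
  proof -
    have "zariski_open {m. D m \<noteq> 0}"
      by (rule zariski_open_nonzero_locus[OF polyfun_D])
    moreover have "zariski_dense {m. D m \<noteq> 0}"
      by (rule zariski_dense_nonzero_locus[where D = D and a = base, OF field_infinite polyfun_D D_base])
    ultimately show ?thesis
      unfolding Let_def slice_eq_coordinate_equations D_nonvanishing_locus
      using slice_irreducible slice_restriction_iso normalizer_ex1 by simp
  qed
qed

end


section \<open>The trace form and the equivariant frame\<close>

definition tmult :: "('k::comm_ring_1,'n::finite) tensor \<Rightarrow> ('n \<Rightarrow> 'k) \<Rightarrow> ('n \<Rightarrow> 'k) \<Rightarrow> 'n \<Rightarrow> 'k" where
  "tmult m x y = (\<lambda>c. \<Sum>a\<in>UNIV. \<Sum>b\<in>UNIV. x a * y b * m a b c)"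

definition mat_vec :: "('k::comm_ring_1,'n::finite) mat \<Rightarrow> ('n \<Rightarrow> 'k) \<Rightarrow> 'n \<Rightarrow> 'k" where
  "mat_vec P x = (\<lambda>a. \<Sum>i\<in>UNIV. P a i * x i)"

definition unit_vec :: "'n \<Rightarrow> 'n \<Rightarrow> 'k::zero_neq_one" where
  "unit_vec a = (\<lambda>i. if i = a then 1 else 0)"

text \<open>\<open>trace_coeff m c\<close> is the trace of left multiplication by the basis vector \<open>e\<^sub>c\<close>.\<close>

definition trace_coeff :: "('k::comm_ring_1,'n::finite) tensor \<Rightarrow> 'n \<Rightarrow> 'k" where
  "trace_coeff m c = (\<Sum>d\<in>UNIV. m c d d)"

definition trace_lin :: "('k::comm_ring_1,'n::finite) tensor \<Rightarrow> ('n \<Rightarrow> 'k) \<Rightarrow> 'k" where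
  "trace_lin m y = (\<Sum>c\<in>UNIV. y c * trace_coeff m c)"

definition trace_form :: "('k::comm_ring_1,'n::finite) tensor \<Rightarrow> ('n \<Rightarrow> 'k) \<Rightarrow> ('n \<Rightarrow> 'k) \<Rightarrow> 'k" where
  "trace_form m x y = trace_lin m (tmult m x y)"

definition trace_gram :: "('k::comm_ring_1,'n::finite) tensor \<Rightarrow> 'n \<Rightarrow> 'n \<Rightarrow> 'k" where
  "trace_gram m i j = (\<Sum>c\<in>UNIV. m i j c * trace_coeff m c)"

definition gram_mat :: "('k::comm_ring_1,'n::finite) tensor \<Rightarrow> 'k^'n^'n" where
  "gram_mat m = (\<chi> j i. trace_gram m i j)"

definition trace_nondeg :: "('k::comm_ring_1,'n::finite) tensor \<Rightarrow> bool" where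
  "trace_nondeg m \<longleftrightarrow> (\<forall>x. (\<forall>y. trace_form m x y = 0) \<longrightarrow> x = (\<lambda>_. 0))"

lemma tmult_mode1: "tmult (mode1 P m) x y = tmult m (mat_vec P x) y"
proof (rule ext)
  fix c
  have "tmult (mode1 P m) x y c = (\<Sum>a'\<in>UNIV. \<Sum>b\<in>UNIV. \<Sum>a\<in>UNIV. x a' * y b * (P a a' * m a b c))"
    unfolding tmult_def mode1_def by (simp add: sum_distrib_left)
  also have "\<dots> = (\<Sum>a'\<in>UNIV. \<Sum>a\<in>UNIV. \<Sum>b\<in>UNIV. x a' * y b * (P a a' * m a b c))"
    by (rule sum.cong[OF refl], rule sum.swap)
  also have "\<dots> = (\<Sum>a\<in>UNIV. \<Sum>a'\<in>UNIV. \<Sum>b\<in>UNIV. x a' * y b * (P a a' * m a b c))"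
    by (rule sum.swap)
  also have "\<dots> = (\<Sum>a\<in>UNIV. \<Sum>b\<in>UNIV. \<Sum>a'\<in>UNIV. x a' * y b * (P a a' * m a b c))"
    by (rule sum.cong[OF refl], rule sum.swap)
  also have "\<dots> = tmult m (mat_vec P x) y c"
    unfolding tmult_def mat_vec_def by (simp add: sum_distrib_left sum_distrib_right mult_ac)
  finally show "tmult (mode1 P m) x y c = tmult m (mat_vec P x) y c" .
qed

lemma tmult_mode2: "tmult (mode2 P m) x y = tmult m x (mat_vec P y)"
proof (rule ext)
  fix c
  have "tmult (mode2 P m) x y c = (\<Sum>a\<in>UNIV. \<Sum>b'\<in>UNIV. \<Sum>b\<in>UNIV. x a * y b' * (P b b' * m a b c))"
    unfolding tmult_def mode2_def by (simp add: sum_distrib_left)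
  also have "\<dots> = (\<Sum>a\<in>UNIV. \<Sum>b\<in>UNIV. \<Sum>b'\<in>UNIV. x a * y b' * (P b b' * m a b c))"
    by (rule sum.cong[OF refl], rule sum.swap)
  also have "\<dots> = tmult m x (mat_vec P y) c"
    unfolding tmult_def mat_vec_def by (simp add: sum_distrib_left sum_distrib_right mult_ac)
  finally show "tmult (mode2 P m) x y c = tmult m x (mat_vec P y) c" .
qed

lemma tmult_mode3: "tmult (mode3 P m) x y = mat_vec P (tmult m x y)"
proof (rule ext)
  fix k
  have "tmult (mode3 P m) x y k = (\<Sum>a\<in>UNIV. \<Sum>b\<in>UNIV. \<Sum>c\<in>UNIV. x a * y b * (P k c * m a b c))"
    unfolding tmult_def mode3_def by (simp add: sum_distrib_left)
  also have "\<dots> = (\<Sum>a\<in>UNIV. \<Sum>c\<in>UNIV. \<Sum>b\<in>UNIV. x a * y b * (P k c * m a b c))"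
    by (rule sum.cong[OF refl], rule sum.swap)
  also have "\<dots> = (\<Sum>c\<in>UNIV. \<Sum>a\<in>UNIV. \<Sum>b\<in>UNIV. x a * y b * (P k c * m a b c))"
    by (rule sum.swap)
  also have "\<dots> = mat_vec P (tmult m x y) k"
    unfolding tmult_def mat_vec_def by (simp add: sum_distrib_left sum_distrib_right mult_ac)
  finally show "tmult (mode3 P m) x y k = mat_vec P (tmult m x y) k" .
qed

lemma mat_vec_mat_vec: "mat_vec P (mat_vec Q x) = mat_vec (mat_mult P Q) x"
proof (rule ext)
  fix a
  have "mat_vec P (mat_vec Q x) a = (\<Sum>i\<in>UNIV. \<Sum>j\<in>UNIV. P a i * (Q i j * x j))"
    unfolding mat_vec_def by (simp add: sum_distrib_left)
  also have "\<dots> = (\<Sum>j\<in>UNIV. \<Sum>i\<in>UNIV. P a i * (Q i j * x j))"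
    by (rule sum.swap)
  also have "\<dots> = mat_vec (mat_mult P Q) x a"
    unfolding mat_vec_def mat_mult_def by (simp add: sum_distrib_left sum_distrib_right mult_ac)
  finally show "mat_vec P (mat_vec Q x) a = mat_vec (mat_mult P Q) x a" .
qed

lemma mat_vec_one [simp]: "mat_vec mat_one x = x"
  unfolding mat_vec_def mat_one_def by (rule ext) simp

lemma mat_vec_mat_inv_cancel:
  assumes "g \<in> GL"
  shows "mat_vec (mat_inv g) (mat_vec g x) = x" "mat_vec g (mat_vec (mat_inv g) x) = x"
  by (simp_all add: mat_vec_mat_vec GL_mat_inv assms)

lemma trace_lin_mode1: "trace_lin (mode1 P m) y = trace_lin m (mat_vec P y)"
proof -
  have "trace_lin (mode1 P m) y = (\<Sum>c\<in>UNIV. \<Sum>d\<in>UNIV. \<Sum>a\<in>UNIV. y c * (P a c * m a d d))"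
    unfolding trace_lin_def trace_coeff_def mode1_def by (simp add: sum_distrib_left)
  also have "\<dots> = (\<Sum>c\<in>UNIV. \<Sum>a\<in>UNIV. \<Sum>d\<in>UNIV. y c * (P a c * m a d d))"
    by (rule sum.cong[OF refl], rule sum.swap)
  also have "\<dots> = (\<Sum>a\<in>UNIV. \<Sum>c\<in>UNIV. \<Sum>d\<in>UNIV. y c * (P a c * m a d d))"
    by (rule sum.swap)
  also have "\<dots> = trace_lin m (mat_vec P y)"
    unfolding trace_lin_def trace_coeff_def mat_vec_def
    by (simp add: sum_distrib_left sum_distrib_right mult_ac)
  finally show ?thesis .
qed

lemma trace_coeff_mode2_mode3:
  assumes "mat_mult P Q = mat_one"
  shows "trace_coeff (mode2 P (mode3 Q m)) = trace_coeff m"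
proof (rule ext)
  fix a
  have "trace_coeff (mode2 P (mode3 Q m)) a
      = (\<Sum>d\<in>UNIV. \<Sum>b\<in>UNIV. \<Sum>c\<in>UNIV. P b d * (Q d c * m a b c))"
    unfolding trace_coeff_def mode2_def mode3_def by (simp add: sum_distrib_left)
  also have "\<dots> = (\<Sum>b\<in>UNIV. \<Sum>d\<in>UNIV. \<Sum>c\<in>UNIV. P b d * (Q d c * m a b c))"
    by (rule sum.swap)
  also have "\<dots> = (\<Sum>b\<in>UNIV. \<Sum>c\<in>UNIV. \<Sum>d\<in>UNIV. P b d * (Q d c * m a b c))"
    by (rule sum.cong[OF refl], rule sum.swap)
  also have "\<dots> = (\<Sum>b\<in>UNIV. \<Sum>c\<in>UNIV. mat_mult P Q b c * m a b c)"
    unfolding mat_mult_def by (simp add: sum_distrib_left sum_distrib_right mult_ac)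
  also have "\<dots> = trace_coeff m a"
    unfolding assms trace_coeff_def mat_one_def by simp
  finally show "trace_coeff (mode2 P (mode3 Q m)) a = trace_coeff m a" .
qed

lemma trace_lin_act:
  assumes "g \<in> GL"
  shows "trace_lin (act g m) (mat_vec g y) = trace_lin m y"
proof -
  have "trace_lin (act g m) (mat_vec g y)
      = trace_lin (mode2 (mat_inv g) (mode3 g m)) (mat_vec (mat_inv g) (mat_vec g y))"
    by (simp add: act_eq_modes trace_lin_mode1)
  also have "\<dots> = trace_lin m y"
    unfolding trace_lin_def trace_coeff_mode2_mode3[OF GL_mat_inv(2)[OF assms]]
      mat_vec_mat_inv_cancel(1)[OF assms] ..
  finally show ?thesis .
qed

lemma tmult_act:
  assumes "g \<in> GL"
  shows "tmult (act g m) (mat_vec g x) (mat_vec g y) = mat_vec g (tmult m x y)"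
  by (simp add: act_eq_modes tmult_mode1 tmult_mode2 tmult_mode3 mat_vec_mat_inv_cancel assms)

lemma trace_form_act:
  assumes "g \<in> GL"
  shows "trace_form (act g m) (mat_vec g x) (mat_vec g y) = trace_form m x y"
  unfolding trace_form_def tmult_act[OF assms] trace_lin_act[OF assms] ..

lemma sum_unit_vec [simp]:
  fixes a :: "'n::finite" and f :: "'n \<Rightarrow> 'k::semiring_1"
  shows "(\<Sum>i\<in>UNIV. unit_vec a i * f i) = f a" "(\<Sum>i\<in>UNIV. f i * unit_vec a i) = f a"
  unfolding unit_vec_def by (simp_all add: sum.delta sum.delta')

lemma tmult_unit_vec: "tmult m (unit_vec a) (unit_vec b) = (\<lambda>c. m a b c)"
proof (rule ext)
  fix c
  have "tmult m (unit_vec a) (unit_vec b) c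
      = (\<Sum>a'\<in>UNIV. unit_vec a a' * (\<Sum>b'\<in>UNIV. unit_vec b b' * m a' b' c))"
    unfolding tmult_def by (simp only: sum_distrib_left mult.assoc)
  also have "\<dots> = m a b c"
    by simp
  finally show "tmult m (unit_vec a) (unit_vec b) c = m a b c" .
qed

lemma trace_form_expand:
  "trace_form m x y = (\<Sum>j\<in>UNIV. y j * (\<Sum>i\<in>UNIV. x i * trace_gram m i j))"
proof -
  have "trace_form m x y = (\<Sum>c\<in>UNIV. \<Sum>i\<in>UNIV. \<Sum>j\<in>UNIV. x i * y j * (m i j c * trace_coeff m c))"
    unfolding trace_form_def trace_lin_def tmult_def
    by (simp add: sum_distrib_left sum_distrib_right mult_ac)
  also have "\<dots> = (\<Sum>i\<in>UNIV. \<Sum>c\<in>UNIV. \<Sum>j\<in>UNIV. x i * y j * (m i j c * trace_coeff m c))"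
    by (rule sum.swap)
  also have "\<dots> = (\<Sum>i\<in>UNIV. \<Sum>j\<in>UNIV. \<Sum>c\<in>UNIV. x i * y j * (m i j c * trace_coeff m c))"
    by (rule sum.cong[OF refl], rule sum.swap)
  also have "\<dots> = (\<Sum>j\<in>UNIV. \<Sum>i\<in>UNIV. x i * y j * trace_gram m i j)"
    unfolding trace_gram_def by (subst sum.swap) (simp add: sum_distrib_left)
  finally show ?thesis
    by (simp add: sum_distrib_left mult_ac)
qed

lemma trace_form_eq_linear_iff:
  "(\<forall>y. trace_form m x y = (\<Sum>j\<in>UNIV. y j * b j)) \<longleftrightarrow> gram_mat m *v (\<chi> i. x i) = (\<chi> j. b j)"
proof -
  have "(\<forall>y. trace_form m x y = (\<Sum>j\<in>UNIV. y j * b j)) \<longleftrightarrow>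
      (\<forall>j. (\<Sum>i\<in>UNIV. x i * trace_gram m i j) = b j)"
  proof
    assume "\<forall>y. trace_form m x y = (\<Sum>j\<in>UNIV. y j * b j)"
    from this[rule_format, of "unit_vec j" for j] show "\<forall>j. (\<Sum>i\<in>UNIV. x i * trace_gram m i j) = b j"
      unfolding trace_form_expand by simp
  qed (simp add: trace_form_expand)
  then show ?thesis
    by (simp add: vec_eq_iff gram_mat_def matrix_vector_mult_def mult.commute)
qed

lemma trace_nondeg_iff_det:
  fixes m :: "('k::field,'n::finite) tensor"
  shows "trace_nondeg m \<longleftrightarrow> det (gram_mat m) \<noteq> 0"
proof -
  have kernel: "(\<forall>y. trace_form m x y = 0) \<longleftrightarrow> gram_mat m *v (\<chi> i. x i) = 0" for x
    using trace_form_eq_linear_iff[of m x "\<lambda>_. 0"] by (simp add: zero_vec_def)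
  have "trace_nondeg m \<longleftrightarrow> (\<forall>w. gram_mat m *v w = 0 \<longrightarrow> w = 0)"
    unfolding trace_nondeg_def kernel
  proof safe
    fix w :: "'k^'n"
    assume "\<forall>x. gram_mat m *v (\<chi> i. x i) = 0 \<longrightarrow> x = (\<lambda>_. 0)" "gram_mat m *v w = 0"
    then have "(\<lambda>i. w $ i) = (\<lambda>_. 0)"
      by simp
    then show "w = 0"
      by (simp add: vec_eq_iff fun_eq_iff)
  next
    fix x :: "'n \<Rightarrow> 'k"
    assume "\<forall>w. gram_mat m *v w = 0 \<longrightarrow> w = 0" "gram_mat m *v (\<chi> i. x i) = 0"
    then have "(\<chi> i. x i) = 0"
      by blast
    then show "x = (\<lambda>_. 0)"
      by (simp add: vec_eq_iff fun_eq_iff)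
  qed
  also have "\<dots> \<longleftrightarrow> det (gram_mat m) \<noteq> 0"
    by (simp add: invertible_det_nz[symmetric] invertible_left_inverse matrix_left_invertible_ker)
  finally show ?thesis .
qed

lemma trace_nondeg_act:
  assumes g: "g \<in> GL" and "trace_nondeg m"
  shows "trace_nondeg (act g m)"
  unfolding trace_nondeg_def
proof (intro allI impI)
  fix x
  assume x: "\<forall>y. trace_form (act g m) x y = 0"
  have "trace_form m (mat_vec (mat_inv g) x) y = 0" for y
    using trace_form_act[OF g, of m "mat_vec (mat_inv g) x" y] x
    by (simp add: mat_vec_mat_inv_cancel[OF g])
  then have "mat_vec (mat_inv g) x = (\<lambda>_. 0)"
    using assms(2) unfolding trace_nondeg_def by blast
  then have "mat_vec g (mat_vec (mat_inv g) x) = (\<lambda>_. 0)"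
    by (simp add: mat_vec_def)
  then show "x = (\<lambda>_. 0)"
    by (simp add: mat_vec_mat_inv_cancel[OF g])
qed

text \<open>The vector \<open>u\<close> with \<open>A(u, -) = \<tau>\<close>; meaningful only where the trace form is nondegenerate.\<close>

definition trace_dual :: "('k::field,'n::finite) tensor \<Rightarrow> 'n \<Rightarrow> 'k" where
  "trace_dual m = (THE u. \<forall>y. trace_form m u y = trace_lin m y)"

lemma trace_form_eq_trace_lin_iff:
  "(\<forall>y. trace_form m u y = trace_lin m y) \<longleftrightarrow>
     gram_mat m *v (\<chi> i. u i) = (\<chi> j. trace_coeff m j)"
  using trace_form_eq_linear_iff[of m u "trace_coeff m"] by (simp add: trace_lin_def)

lemma trace_dual_ex1:
  fixes m :: "('k::field,'n::finite) tensor"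
  assumes "trace_nondeg m"
  shows "\<exists>!u. \<forall>y. trace_form m u y = trace_lin m y"
proof -
  have "det (gram_mat m) \<noteq> 0"
    using assms trace_nondeg_iff_det by blast
  then obtain w where w: "\<And>w'. gram_mat m *v w' = (\<chi> j. trace_coeff m j) \<longleftrightarrow> w' = w"
    using cramer by blast
  show ?thesis
    unfolding trace_form_eq_trace_lin_iff
  proof (rule ex1I[of _ "\<lambda>i. w $ i"])
    show "gram_mat m *v (\<chi> i. w $ i) = (\<chi> j. trace_coeff m j)"
      using w by simp
    show "u = (\<lambda>i. w $ i)" if "gram_mat m *v (\<chi> i. u i) = (\<chi> j. trace_coeff m j)" for u
      using that w by (simp add: vec_eq_iff fun_eq_iff)
  qed
qed

lemma trace_dual:
  "trace_nondeg m \<Longrightarrow> trace_form m (trace_dual m) y = trace_lin m y"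
  using theI'[OF trace_dual_ex1] unfolding trace_dual_def by blast

lemma trace_dual_unique:
  "trace_nondeg m \<Longrightarrow> (\<And>y. trace_form m u y = trace_lin m y) \<Longrightarrow> u = trace_dual m"
  using the1_equality[OF trace_dual_ex1] unfolding trace_dual_def by blast

lemma trace_dual_act:
  assumes g: "g \<in> GL" and m: "trace_nondeg m"
  shows "trace_dual (act g m) = mat_vec g (trace_dual m)"
proof (rule sym, rule trace_dual_unique)
  show "trace_nondeg (act g m)"
    by (rule trace_nondeg_act[OF g m])
  fix y
  have "trace_form (act g m) (mat_vec g (trace_dual m)) y
      = trace_form (act g m) (mat_vec g (trace_dual m)) (mat_vec g (mat_vec (mat_inv g) y))"
    by (simp add: mat_vec_mat_inv_cancel[OF g])
  also have "\<dots> = trace_lin m (mat_vec (mat_inv g) y)"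
    by (simp add: trace_form_act[OF g] trace_dual[OF m])
  also have "\<dots> = trace_lin (act g m) y"
    using trace_lin_act[OF g, of m "mat_vec (mat_inv g) y"] by (simp add: mat_vec_mat_inv_cancel[OF g])
  finally show "trace_form (act g m) (mat_vec g (trace_dual m)) y = trace_lin (act g m) y" .
qed

lemma polyfun_trace_coeff: "(\<lambda>m. trace_coeff m c) \<in> polyfun"
  unfolding trace_coeff_def by (intro polyfun_sum polyfun.coord) simp_all

lemma polyfun_trace_gram: "(\<lambda>m. trace_gram m i j) \<in> polyfun"
  unfolding trace_gram_def by (intro polyfun_sum polyfun.mult polyfun.coord polyfun_trace_coeff) simp_all

lemma polyfun_det_gram_mat: "(\<lambda>m. det (gram_mat m)) \<in> polyfun"
  unfolding gram_mat_def by (rule polyfun_det) (rule polyfun_trace_gram)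

lemma rational_on_trace_dual:
  assumes "\<And>m. m \<in> U \<Longrightarrow> trace_nondeg m"
  shows "rational_on U (\<lambda>m. trace_dual m k)"
proof -
  have "rational_on U (\<lambda>m. (\<chi> i. trace_dual m i) $ k)"
  proof (rule rational_on_solution)
    show "rational_on U (\<lambda>m. gram_mat m $ i $ j)" for i j
      unfolding gram_mat_def by (simp add: polyfun_imp_rational_on polyfun_trace_gram)
    show "rational_on U (\<lambda>m. (\<chi> j. trace_coeff m j) $ i)" for i
      by (simp add: polyfun_imp_rational_on polyfun_trace_coeff)
    show "det (gram_mat m) \<noteq> 0" if "m \<in> U" for m
      using assms[OF that] trace_nondeg_iff_det by blast
    show "gram_mat m *v (\<chi> i. trace_dual m i) = (\<chi> j. trace_coeff m j)" if "m \<in> U" for m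
      using trace_dual[OF assms[OF that]] trace_form_eq_trace_lin_iff by blast
  qed
  then show ?thesis
    by simp
qed

primrec power_vec :: "('k::field,'n::finite) tensor \<Rightarrow> nat \<Rightarrow> 'n \<Rightarrow> 'k" where
  "power_vec m 0 = trace_dual m"
| "power_vec m (Suc k) = tmult m (trace_dual m) (power_vec m k)"

lemma power_vec_act:
  assumes "g \<in> GL" "trace_nondeg m"
  shows "power_vec (act g m) k = mat_vec g (power_vec m k)"
  by (induction k) (simp_all add: trace_dual_act[OF assms] tmult_act[OF assms(1)])

lemma rational_on_power_vec:
  assumes "\<And>m. m \<in> U \<Longrightarrow> trace_nondeg m"
  shows "rational_on U (\<lambda>m. power_vec m k c)"
proof (induction k arbitrary: c)
  case 0
  then show ?case using rational_on_trace_dual[OF assms] by simp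
next
  case (Suc k)
  show ?case
    unfolding power_vec.simps tmult_def
    by (intro rational_on_sum rational_on_mult rational_on_trace_dual[OF assms] Suc rational_on_coord)
      simp_all
qed


section \<open>A normal form for the action\<close>

locale enumerated =
  fixes e :: "nat \<Rightarrow> 'n::finite"
  assumes bij: "bij_betw e {..<CARD('n)} UNIV"
begin

definition idx :: "'n \<Rightarrow> nat" where
  "idx = the_inv_into {..<CARD('n)} e"

lemma e_idx [simp]: "e (idx j) = j"
  unfolding idx_def using bij by (simp add: bij_betw_def f_the_inv_into_f)

lemma idx_less: "idx j < CARD('n)"
  unfolding idx_def using the_inv_into_into[of e "{..<CARD('n)}" j "{..<CARD('n)}"] bij
  unfolding bij_betw_def by auto

lemma idx_e [simp]: "k < CARD('n) \<Longrightarrow> idx (e k) = k"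
  unfolding idx_def using bij by (simp add: bij_betw_def the_inv_into_f_f)

definition e_first :: 'n where
  "e_first = e 0"

definition e_last :: 'n where
  "e_last = e (CARD('n) - 1)"

definition e_next :: "'n \<Rightarrow> 'n" where
  "e_next j = e (Suc (idx j))"

lemma e_inject: "k < CARD('n) \<Longrightarrow> k' < CARD('n) \<Longrightarrow> e k = e k' \<Longrightarrow> k = k'"
  by (metis idx_e)

lemma Suc_idx_less: "j \<noteq> e_last \<Longrightarrow> Suc (idx j) < CARD('n)"
proof -
  assume "j \<noteq> e_last"
  then have "idx j \<noteq> CARD('n) - 1"
    unfolding e_last_def by (metis e_idx)
  then show ?thesis
    using idx_less[of j] by simp
qed

lemma e_next_neq: "j \<noteq> e_last \<Longrightarrow> e_next j \<noteq> j"
proof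
  assume "j \<noteq> e_last" "e_next j = j"
  then have "e (Suc (idx j)) = e (idx j)"
    unfolding e_next_def by simp
  then have "Suc (idx j) = idx j"
    using e_inject Suc_idx_less[OF \<open>j \<noteq> e_last\<close>] idx_less by blast
  then show False
    by simp
qed

lemma e_neq_last: "Suc k < CARD('n) \<Longrightarrow> e k \<noteq> e_last"
  unfolding e_last_def using e_inject[of k "CARD('n) - 1"] by fastforce

lemma e_next_e: "Suc k < CARD('n) \<Longrightarrow> e_next (e k) = e (Suc k)"
  unfolding e_next_def by simp

lemma e_last_neq_first: "i \<noteq> e_first \<Longrightarrow> e_last \<noteq> e_first"
proof
  assume "i \<noteq> e_first" "e_last = e_first"
  then have "CARD('n) - 1 = 0"
    unfolding e_last_def e_first_def using e_inject[of "CARD('n) - 1" 0] by simp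
  then have "idx i = 0"
    using idx_less[of i] by simp
  then show False
    using \<open>i \<noteq> e_first\<close> unfolding e_first_def by (metis e_idx)
qed

definition power_mat :: "('k::field,'n) tensor \<Rightarrow> ('k,'n) mat" where
  "power_mat m = (\<lambda>i j. power_vec m (idx j) i)"

definition normalizer :: "('k::field,'n) tensor \<Rightarrow> ('k,'n) mat" where
  "normalizer m = mat_inv (power_mat m)"

lemma power_mat_act:
  assumes "g \<in> GL" "trace_nondeg m"
  shows "power_mat (act g m) = mat_mult g (power_mat m)"
  unfolding power_mat_def power_vec_act[OF assms] mat_vec_def mat_mult_def by simp

lemma rational_on_power_mat:
  "(\<And>m. m \<in> U \<Longrightarrow> trace_nondeg m) \<Longrightarrow> rational_on U (\<lambda>m. power_mat m i j)"
  unfolding power_mat_def by (rule rational_on_power_vec)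

lemma normalizer_GL:
  "det (vec_of_mat (power_mat m)) \<noteq> 0 \<Longrightarrow> normalizer m \<in> GL"
  unfolding normalizer_def by (intro GL_mat_inv_closed det_nonzero_imp_GL)

lemma mat_inv_normalizer:
  assumes "det (vec_of_mat (power_mat m)) \<noteq> 0"
  shows "mat_inv (normalizer m) = power_mat m"
proof -
  have "power_mat m = mat_inv (normalizer m)"
    by (rule mat_inv_unique_right[OF normalizer_GL[OF assms]])
      (simp add: normalizer_def GL_mat_inv(2)[OF det_nonzero_imp_GL[OF assms]])
  then show ?thesis
    by simp
qed

lemma vec_of_mat_mult_column: "vec_of_mat A *v (\<chi> i. B i j) = (\<chi> i. mat_mult A B i j)"
  by (simp add: vec_eq_iff vec_of_mat_def matrix_vector_mult_def mat_mult_def)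

lemma rational_on_normalizer:
  assumes "\<And>m. m \<in> U \<Longrightarrow> trace_nondeg m \<and> det (vec_of_mat (power_mat m)) \<noteq> 0"
  shows "rational_on U (\<lambda>m. normalizer m i j)"
proof -
  have "rational_on U (\<lambda>m. (\<chi> i. normalizer m i j) $ i)"
  proof (rule rational_on_solution)
    show "rational_on U (\<lambda>m. vec_of_mat (power_mat m) $ a $ b)" for a b
      unfolding vec_of_mat_def using rational_on_power_mat[of U, OF conjunct1[OF assms]] by simp
    show "rational_on U (\<lambda>m. (\<chi> i. mat_one i j) $ a)" for a
      by (simp add: rational_on_const)
    show "det (vec_of_mat (power_mat m)) \<noteq> 0" if "m \<in> U" for m
      using assms[OF that] by blast
    show "vec_of_mat (power_mat m) *v (\<chi> i. normalizer m i j) = (\<chi> i. mat_one i j)" if "m \<in> U" for m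
      using GL_mat_inv(1)[OF det_nonzero_imp_GL[OF conjunct2[OF assms[OF that]]]]
      by (simp add: vec_of_mat_mult_column normalizer_def)
  qed
  then show ?thesis
    by simp
qed

text \<open>
  The conditions say \<open>e_first \<cdot> e\<^sub>j = e_next j\<close> below the last index; given these, and for
  nondegenerate \<open>m\<close>, \<open>u = e_first\<close> holds iff the trace coefficients are constant and the row
  \<open>m e_first e_last\<close> sums to \<open>1\<close>.
\<close>

definition in_normal_form :: "('k::field,'n) tensor \<Rightarrow> bool" where
  "in_normal_form m \<longleftrightarrow>
     (\<forall>j. j \<noteq> e_last \<longrightarrow> (\<forall>c. m e_first j c = unit_vec (e_next j) c)) \<and>
     (\<Sum>c\<in>UNIV. m e_first e_last c) = 1 \<and>
     (\<forall>i. trace_coeff m i = trace_coeff m e_first)"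

text \<open>The normal-form equations are solved for the coordinates they constrain.\<close>

definition normal_retract :: "('k::field,'n) tensor \<Rightarrow> ('k,'n) tensor" where
  "normal_retract m = (\<lambda>i j c.
     if i = e_first \<and> j \<noteq> e_last then unit_vec (e_next j) c
     else if i = e_first \<and> j = e_last \<and> c = e_first then 1 - (\<Sum>c'\<in>UNIV - {e_first}. m e_first e_last c')
     else if i \<noteq> e_first \<and> j = e_first \<and> c = e_first
       then m e_first e_last e_last - (\<Sum>c'\<in>UNIV - {e_first}. m i c' c')
     else m i j c)"

lemma trace_coeff_split: "trace_coeff m i = m i a a + (\<Sum>c\<in>UNIV - {a}. m i c c)"
  unfolding trace_coeff_def by (rule sum.remove) auto

lemma trace_coeff_first:
  assumes "\<And>j c. j \<noteq> e_last \<Longrightarrow> m e_first j c = unit_vec (e_next j) c"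
  shows "trace_coeff m e_first = m e_first e_last e_last"
proof -
  have "(\<Sum>d\<in>UNIV - {e_last}. m e_first d d) = 0"
    by (rule sum.neutral) (auto simp: assms unit_vec_def dest: e_next_neq)
  then show ?thesis
    by (simp add: trace_coeff_split[of _ _ e_last])
qed

lemma in_normal_form_normal_retract: "in_normal_form (normal_retract m)"
proof -
  let ?m = "normal_retract m"
  have first_row: "\<And>j c. j \<noteq> e_last \<Longrightarrow> ?m e_first j c = unit_vec (e_next j) c"
    unfolding normal_retract_def by simp
  have "(\<Sum>c\<in>UNIV - {e_first}. ?m e_first e_last c) = (\<Sum>c\<in>UNIV - {e_first}. m e_first e_last c)"
    by (rule sum.cong) (auto simp: normal_retract_def)
  then have last_row: "(\<Sum>c\<in>UNIV. ?m e_first e_last c) = 1"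
    by (simp add: sum.remove[of UNIV e_first] normal_retract_def)
  have "trace_coeff ?m i = trace_coeff ?m e_first" for i
  proof (cases "i = e_first")
    case False
    have "(\<Sum>c\<in>UNIV - {e_first}. ?m i c c) = (\<Sum>c\<in>UNIV - {e_first}. m i c c)"
      by (rule sum.cong) (auto simp: normal_retract_def False)
    then have "trace_coeff ?m i = m e_first e_last e_last"
      by (simp add: trace_coeff_split[of _ _ e_first] normal_retract_def False)
    also have "\<dots> = trace_coeff ?m e_first"
      using trace_coeff_first[of ?m, OF first_row] e_last_neq_first[OF False]
      by (simp add: normal_retract_def)
    finally show ?thesis .
  qed simp
  then show ?thesis
    unfolding in_normal_form_def using first_row last_row by blast
qed

lemma normal_retract_fixed:
  assumes "in_normal_form m"
  shows "normal_retract m = m"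
proof (intro ext)
  fix i j c
  have first_row: "\<And>j c. j \<noteq> e_last \<Longrightarrow> m e_first j c = unit_vec (e_next j) c"
    and last_row: "(\<Sum>c\<in>UNIV. m e_first e_last c) = 1"
    and trace: "\<And>i. trace_coeff m i = trace_coeff m e_first"
    using assms unfolding in_normal_form_def by blast+
  have "m e_first e_last e_first = 1 - (\<Sum>c'\<in>UNIV - {e_first}. m e_first e_last c')"
    using last_row sum.remove[of UNIV e_first "\<lambda>c. m e_first e_last c"] by (simp add: eq_diff_eq)
  moreover have "m i e_first e_first = m e_first e_last e_last - (\<Sum>c'\<in>UNIV - {e_first}. m i c' c')"
    using trace[of i] trace_coeff_first[of m, OF first_row] trace_coeff_split[of m i e_first]
    by (simp add: eq_diff_eq)
  ultimately show "normal_retract m i j c = m i j c"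
    using first_row by (auto simp: normal_retract_def)
qed

lemma normal_retract_idem: "normal_retract (normal_retract m) = normal_retract m"
  by (rule normal_retract_fixed[OF in_normal_form_normal_retract])

lemma normal_retract_fixed_iff: "normal_retract m = m \<longleftrightarrow> in_normal_form m"
  using normal_retract_fixed in_normal_form_normal_retract by metis

lemma polyfun_normal_retract: "(\<lambda>m. normal_retract m i j c) \<in> polyfun"
  unfolding normal_retract_def
  by (intro polyfun_if polyfun_diff polyfun_sum polyfun.const polyfun.coord) simp_all

lemma power_mat_normal_form:
  fixes m :: "('k::field,'n) tensor"
  assumes "trace_nondeg m" "in_normal_form m"
  shows "power_mat m = mat_one"
proof -
  have first_row: "\<And>j c. j \<noteq> e_last \<Longrightarrow> m e_first j c = unit_vec (e_next j) c"
    and last_row: "(\<Sum>c\<in>UNIV. m e_first e_last c) = 1"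
    and trace: "\<And>i. trace_coeff m i = trace_coeff m e_first"
    using assms(2) unfolding in_normal_form_def by blast+
  have row_sums: "(\<Sum>c\<in>UNIV. m e_first j c) = 1" for j
    by (cases "j = e_last") (simp_all add: last_row first_row unit_vec_def)
  define t where "t = trace_coeff m e_first"
  have t: "trace_coeff m i = t" for i
    unfolding t_def by (rule trace)
  have "trace_gram m e_first j = trace_coeff m j" for j
    unfolding trace_gram_def t by (simp add: sum_distrib_right[symmetric] row_sums)
  then have "trace_form m (unit_vec e_first) y = trace_lin m y" for y
    by (simp add: trace_form_expand trace_lin_def)
  then have u: "trace_dual m = unit_vec e_first"
    using trace_dual_unique[OF assms(1)] by metis
  have "power_vec m k = unit_vec (e k)" if "k < CARD('n)" for k
    using that
  proof (induction k)
    case 0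
    then show ?case using u by (simp add: e_first_def)
  next
    case (Suc k)
    then have "power_vec m (Suc k) = (\<lambda>c. m e_first (e k) c)"
      using u by (simp add: tmult_unit_vec)
    also have "\<dots> = unit_vec (e (Suc k))"
      using first_row[OF e_neq_last[OF Suc.prems]] e_next_e[OF Suc.prems] by (simp add: fun_eq_iff)
    finally show ?case .
  qed
  then show ?thesis
    unfolding power_mat_def mat_one_def unit_vec_def using idx_less by (intro ext) simp
qed

lemma power_vec_of_power_mat_one:
  assumes "power_mat m = mat_one" "k < CARD('n)"
  shows "power_vec m k = unit_vec (e k)"
  using fun_cong[OF fun_cong[OF assms(1)], of _ "e k"] assms(2)
  unfolding power_mat_def mat_one_def unit_vec_def by (intro ext) simp

lemma trace_dual_of_power_mat_one:
  "power_mat m = mat_one \<Longrightarrow> trace_dual m = unit_vec e_first"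
  using power_vec_of_power_mat_one[of m 0] by (simp add: e_first_def)

lemma first_row_of_power_mat_one:
  assumes "power_mat m = mat_one" "j \<noteq> e_last"
  shows "m e_first j c = unit_vec (e_next j) c"
proof -
  have "unit_vec (e_next j) = power_vec m (Suc (idx j))"
    unfolding e_next_def using power_vec_of_power_mat_one[OF assms(1) Suc_idx_less[OF assms(2)]] by simp
  also have "\<dots> = (\<lambda>c. m e_first j c)"
    using power_vec_of_power_mat_one[OF assms(1) idx_less] trace_dual_of_power_mat_one[OF assms(1)]
    by (simp add: tmult_unit_vec)
  finally show ?thesis
    by (simp add: fun_eq_iff)
qed

lemma normal_form_of_power_mat:
  fixes m :: "('k::field,'n) tensor"
  assumes "trace_nondeg m" "power_mat m = mat_one"
  shows "in_normal_form m"
proof -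
  note u = trace_dual_of_power_mat_one[OF assms(2)]
  note first_row = first_row_of_power_mat_one[OF assms(2)]
  have dual: "trace_gram m e_first j = trace_coeff m j" for j
    using trace_dual[OF assms(1), of "unit_vec j"] u
    by (simp add: trace_form_def trace_lin_def tmult_unit_vec trace_gram_def)
  have step: "trace_coeff m (e_next j) = trace_coeff m j" if "j \<noteq> e_last" for j
    using dual[of j] first_row[OF that] by (simp add: trace_gram_def unit_vec_def)
  have "trace_coeff m (e k) = trace_coeff m e_first" if "k < CARD('n)" for k
    using that
  proof (induction k)
    case (Suc k)
    then show ?case
      using step[OF e_neq_last[OF Suc.prems]] e_next_e[OF Suc.prems] by simp
  qed (simp add: e_first_def)
  then have trace: "trace_coeff m i = trace_coeff m e_first" for i
    using idx_less[of i] by (metis e_idx)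
  define t where "t = trace_coeff m e_first"
  have t: "trace_coeff m i = t" for i
    unfolding t_def by (rule trace)
  have "t \<noteq> 0"
  proof
    assume "t = 0"
    then have "trace_form m (unit_vec e_first) y = 0" for y
      unfolding trace_form_def trace_lin_def by (simp add: t)
    then have "unit_vec e_first = (\<lambda>_. 0::'k)"
      using assms(1) unfolding trace_nondeg_def by blast
    then show False
      by (metis unit_vec_def zero_neq_one)
  qed
  moreover have "t = (\<Sum>c\<in>UNIV. m e_first e_last c) * t"
    using dual[of e_last] unfolding trace_gram_def by (simp add: t sum_distrib_right)
  ultimately have "(\<Sum>c\<in>UNIV. m e_first e_last c) = 1"
    by simp
  then show ?thesis
    unfolding in_normal_form_def using first_row trace by blast
qed

lemma normalizer_to_normal_form:
  assumes "trace_nondeg m" "det (vec_of_mat (power_mat m)) \<noteq> 0"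
  shows "normal_retract (act (normalizer m) m) = act (normalizer m) m"
proof -
  have g: "normalizer m \<in> GL"
    by (rule normalizer_GL[OF assms(2)])
  have "power_mat (act (normalizer m) m) = mat_one"
    using power_mat_act[OF g assms(1)] GL_mat_inv(2)[OF det_nonzero_imp_GL[OF assms(2)]]
    by (simp add: normalizer_def)
  then show ?thesis
    using normal_form_of_power_mat trace_nondeg_act[OF g assms(1)] normal_retract_fixed by blast
qed

lemma normalizer_unique:
  assumes "trace_nondeg m" "det (vec_of_mat (power_mat m)) \<noteq> 0" "g \<in> GL"
    and "normal_retract (act g m) = act g m"
  shows "g = normalizer m"
proof -
  have "power_mat (act g m) = mat_one"
    using power_mat_normal_form trace_nondeg_act[OF assms(3,1)] assms(4) normal_retract_fixed_iff by blast
  then have "mat_mult g (power_mat m) = mat_one"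
    using power_mat_act[OF assms(3,1)] by simp
  then show ?thesis
    unfolding normalizer_def by (rule mat_inv_unique_left[OF det_nonzero_imp_GL[OF assms(2)]])
qed

definition normal_base :: "('k::field,'n) tensor" where
  "normal_base = (\<lambda>i j c. if i = e_first then (if j \<noteq> e_last then unit_vec (e_next j) c else unit_vec e_last c)
     else (if i = j \<and> j = c then 1 else 0))"

lemma trace_coeff_normal_base: "trace_coeff (normal_base :: ('k::field,'n) tensor) i = 1"
proof (cases "i = e_first")
  case True
  have "trace_coeff (normal_base :: ('k,'n) tensor) e_first = normal_base e_first e_last e_last"
    by (rule trace_coeff_first) (simp add: normal_base_def)
  then show ?thesis
    using True by (simp add: normal_base_def unit_vec_def)
next
  case False
  then show ?thesis unfolding trace_coeff_def normal_base_def by simp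
qed

lemma in_normal_form_normal_base: "in_normal_form (normal_base :: ('k::field,'n) tensor)"
  unfolding in_normal_form_def by (simp add: trace_coeff_normal_base) (simp add: normal_base_def unit_vec_def)

lemma trace_nondeg_normal_base: "trace_nondeg (normal_base :: ('k::field,'n) tensor)"
  unfolding trace_nondeg_def
proof (intro allI impI)
  fix x :: "'n \<Rightarrow> 'k"
  assume x: "\<forall>y. trace_form normal_base x y = 0"
  have gram: "trace_gram normal_base i j = (if i = e_first \<or> i = j then 1 else (0::'k))" for i j
  proof -
    have "trace_gram normal_base i j = (\<Sum>c\<in>UNIV. (normal_base :: ('k,'n) tensor) i j c)"
      by (simp add: trace_gram_def trace_coeff_normal_base)
    also have "\<dots> = (if i = e_first \<or> i = j then 1 else 0)"
      by (cases "i = e_first"; cases "j = e_last") (simp_all add: normal_base_def unit_vec_def)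
    finally show ?thesis .
  qed
  have row: "(\<Sum>i\<in>UNIV. x i * trace_gram normal_base i j) = x e_first + (if j \<noteq> e_first then x j else 0)"
    for j
  proof -
    have "(\<Sum>i\<in>UNIV. x i * trace_gram normal_base i j)
        = x e_first * trace_gram normal_base e_first j + (\<Sum>i\<in>UNIV - {e_first}. x i * trace_gram normal_base i j)"
      by (rule sum.remove) auto
    also have "(\<Sum>i\<in>UNIV - {e_first}. x i * trace_gram normal_base i j)
        = (\<Sum>i\<in>UNIV - {e_first}. if i = j then x i else 0)"
      by (rule sum.cong) (auto simp: gram)
    also have "\<dots> = (if j \<noteq> e_first then x j else 0)"
      by (simp add: sum.delta')
    finally show ?thesis
      by (simp add: gram)
  qed
  have zero: "(\<Sum>i\<in>UNIV. x i * trace_gram normal_base i j) = 0" for j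
    using x[rule_format, of "unit_vec j"] unfolding trace_form_expand by simp
  have "x e_first = 0"
    using row[of e_first] zero[of e_first] by simp
  then have "x j = 0" for j
    using row[of j] zero[of j] by (cases "j = e_first") simp_all
  then show "x = (\<lambda>_. 0)"
    by (simp add: fun_eq_iff)
qed

lemma slice_denominator:
  "\<exists>D\<in>polyfun. D (normal_base :: ('k::field,'n) tensor) \<noteq> 0 \<and>
     (\<forall>m. D m \<noteq> 0 \<longrightarrow> trace_nondeg m \<and> det (vec_of_mat (power_mat m)) \<noteq> 0)"
proof -
  have "rational_on {m :: ('k,'n) tensor. trace_nondeg m} (\<lambda>m. power_mat m i j)" for i j
    by (rule rational_on_power_mat) simp
  then have "rational_on {m :: ('k,'n) tensor. trace_nondeg m} (\<lambda>m. det (vec_of_mat (power_mat m)))"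
    by (intro rational_on_det) (simp add: vec_of_mat_def)
  then obtain P Q :: "('k,'n) tensor \<Rightarrow> 'k" where PQ: "P \<in> polyfun"
    "\<And>m. trace_nondeg m \<Longrightarrow> Q m \<noteq> 0 \<and> det (vec_of_mat (power_mat m)) = P m / Q m"
    unfolding rational_on_def by auto
  have "power_mat (normal_base :: ('k,'n) tensor) = mat_one"
    by (rule power_mat_normal_form[OF trace_nondeg_normal_base in_normal_form_normal_base])
  then have "P normal_base \<noteq> 0"
    using PQ(2)[OF trace_nondeg_normal_base] by (auto simp: vec_of_mat_one)
  then show ?thesis
    using PQ trace_nondeg_normal_base
    by (intro bexI[of _ "\<lambda>m. det (gram_mat m) * P m"])
      (auto simp: trace_nondeg_iff_det intro: polyfun.mult polyfun_det_gram_mat)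
qed

lemma rational_slice_normal_form:
  assumes "infinite (UNIV :: 'k::field set)" "D \<in> polyfun" "D (normal_base :: ('k,'n) tensor) \<noteq> 0"
    and "\<And>m. D m \<noteq> 0 \<Longrightarrow> trace_nondeg m \<and> det (vec_of_mat (power_mat m)) \<noteq> 0"
  shows "rational_slice normal_retract D normalizer (normal_base :: ('k,'n) tensor)"
proof
  show "infinite (UNIV :: 'k set)" "D \<in> polyfun" "D normal_base \<noteq> 0"
    by (fact assms(1-3))+
  show "(\<lambda>m. normal_retract m i j c) \<in> polyfun" for i j c
    by (rule polyfun_normal_retract)
  show "normal_retract (normal_retract m) = normal_retract m" for m
    by (rule normal_retract_idem)
  show "normal_retract normal_base = normal_base"
    by (rule normal_retract_fixed[OF in_normal_form_normal_base])
  show "normalizer m \<in> GL" if "D m \<noteq> 0" for m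
    using normalizer_GL assms(4)[OF that] by blast
  show "normal_retract (act (normalizer m) m) = act (normalizer m) m" if "D m \<noteq> 0" for m
    using normalizer_to_normal_form assms(4)[OF that] by blast
  show "g = normalizer m" if "D m \<noteq> 0" "g \<in> GL" "normal_retract (act g m) = act g m" for m g
    using normalizer_unique assms(4)[OF that(1)] that(2,3) by blast
  show "rational_on {m. D m \<noteq> 0} (\<lambda>m. normalizer m i j)" for i j
    by (rule rational_on_normalizer) (use assms(4) in blast)
  show "rational_on {m. D m \<noteq> 0} (\<lambda>m. mat_inv (normalizer m) i j)" for i j
  proof (rule rational_on_cong)
    show "rational_on {m. D m \<noteq> 0} (\<lambda>m. power_mat m i j)"
      by (rule rational_on_power_mat) (use assms(4) in blast)
  qed (simp add: mat_inv_normalizer assms(4))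
qed

end


theorem theorem2:
  fixes k_ty :: "'k::field itself" and n_ty :: "'n::finite itself"
  assumes "alg_closed TYPE('k)"
    and "(2::'k) \<noteq> 0"
  shows "\<exists>(Sp :: (('k,'n) tensor \<Rightarrow> 'k) set) (Tq :: (('k,'n) tensor \<Rightarrow> 'k) set).
           finite Sp \<and> finite Tq \<and> Sp \<subseteq> polyfun \<and> Tq \<subseteq> polyfun \<and>
           (\<forall>s\<in>Sp. nonconstant s) \<and> (\<forall>t\<in>Tq. nonconstant t) \<and>
           (let S = {m. \<forall>s\<in>Sp. s m = 0}; U = {m. \<forall>t\<in>Tq. t m \<noteq> 0} in
              irreducible_set S \<and> restriction_iso S \<and>
              zariski_open U \<and> zariski_dense U \<and>
              (\<forall>a\<in>U. \<exists>!g. g \<in> GL \<and> act g a \<in> S))"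
proof -
  \<comment> \<open>The slice works in every characteristic; only the infinitude of \<open>k\<close> is used.\<close>
  have field_infinite: "infinite (UNIV :: 'k set)"
    by (rule alg_closed_imp_infinite[OF assms(1)])
  obtain e :: "nat \<Rightarrow> 'n" where "bij_betw e {..<CARD('n)} UNIV"
    using ex_bij_betw_nat_finite[of "UNIV :: 'n set"] by (auto simp: atLeast0LessThan)
  then interpret enumerated e
    by unfold_locales
  obtain D :: "('k,'n) tensor \<Rightarrow> 'k" where "D \<in> polyfun" "D normal_base \<noteq> 0"
    "\<And>m. D m \<noteq> 0 \<Longrightarrow> trace_nondeg m \<and> det (vec_of_mat (power_mat m)) \<noteq> 0"
    using slice_denominator by blast
  then interpret rational_slice normal_retract D normalizer "normal_base :: ('k,'n) tensor"
    by (intro rational_slice_normal_form field_infinite)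
  show ?thesis
    by (rule slice_theorem)
qed

end
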